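(* Let $Z=(X,Y)\in\Omega_m$ and let $p$ be a hyperbolic singular point of the Filippov vector field $F_{\mathcal P(Z)}$. Then for every transition function $\varphi$ there exist a neighborhood $V$ of $p$ in $S^2_+\cup S^1$ and $\epsilon_0>0$ such that for all $0<\epsilon\le\epsilon_0$ the vector field $\mathcal P(Z)_\epsilon$ has in $V$ a unique singular point, and it is a hyperbolic saddle or a hyperbolic node.
   Context: Fix an integer $m\ge1$. $\chi_m$ is the space of polynomial vector fields $X=P(x,y)\partial_x+Q(x,y)\partial_y$ on $\mathbb R^2$ with $P,Q$ real polynomials of degree $\le m$, identified with their coefficient vectors in $\mathbb R^{(m+1)(m+2)}$; $\deg X=\max\{\deg P,\deg Q\}$. Let $f(x,y)=y$, $D=\{y=0\}$, $N=\{y>0\}$, $S=\{y<0\}$. $\Omega_m$ is the set of pairs $Z=(X,Y)$ with $X,Y\in\chi_m$ of degree exactly $m$, regarded as the discontinuous vector field equal to $X$ on $\{y\ge0\}$ and to $Y$ on $\{y\le0\}$ (bi-valued on $D$). For $X\in\chi_m$ its Poincaré compactification $\mathcal P(X)$ is the unique analytic vector field on $S^2=\{x^2+y^2+z^2=1\}$, tangent to $S^2$, whose restriction to $S^2_+=\{z>0\}$ is $z^{m-1}\wp^*(X)$, where $\wp(u,v)=(u,v,1)/\sqrt{u^2+v^2+1}$; the equator $S^1=\{z=0\}$ is invariant. For $Z=(X,Y)$, $\mathcal P(Z)=(\mathcal P(X),\mathcal P(Y))$ is the discontinuous vector field on the sphere equal to $\mathcal P(X)$ where $y\ge0$ and to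 $\mathcal P(Y)$ where $y\le0$, with $f(x,y,z)=y$, discontinuity set $D=\{y=0\}$, $N=\{y>0\}$, $S=\{y<0\}$. A transition function is a $C^\infty$ function $\varphi:\mathbb R\to\mathbb R$ with $\varphi(t)=0$ for $t\le-1$, $\varphi(t)=1$ for $t\ge1$, and $\varphi'(t)>0$ for $t\in(-1,1)$. The $\varphi_\epsilon$-compactification of $Z$ is the family of $C^\infty$ vector fields on $S^2$: $\mathcal P(Z)_\epsilon(q)=(1-\varphi_\epsilon(f(q)))\mathcal P(Y)(q)+\varphi_\epsilon(f(q))\mathcal P(X)(q)$, with $\varphi_\epsilon(t)=\varphi(t/\epsilon)$. For a discontinuous field $(U,V)$ ($U$ on $y\ge0$, $V$ on $y\le0$) write $Uf=\langle\nabla f,U\rangle$. On $D$: escaping arc $ES$ where $Uf>0,Vf<0$; sliding arc $SL$ where $Uf<0,Vf>0$. On $SL\cup ES$ the Filippov vector field $F$ at $p$ is the vector in the cone spanned by $U(p),V(p)$ tangent to $D$. A point $p\in D$ is a singular point of $F$ if $Uf(p)Vf(p)<0$ and $\det[U,V](p)=0$ (determinant of the matrix with rows $U(p),V(p)$); it is hyperbolic if moreover the derivative of $\det[U,V]|_D$ at $p$ is nonzero. Here $(U,V)=\mathcal P(Z)$ and $F=F_{\mathcal P(Z)}$. *)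

theory Defs
  imports "HOL-Analysis.Analysis"
begin

text \<open>A real polynomial in two variables is represented by its coefficient function
  c, with c i j the coefficient of x^i y^j.  A polynomial vector field
  X = P d/dx + Q d/dy is the pair (cP, cQ) of coefficient functions.\<close>

type_synonym pcoeffs = "nat \<Rightarrow> nat \<Rightarrow> real"
type_synonym pfield = "pcoeffs \<times> pcoeffs"

definition poly_deg_le :: "nat \<Rightarrow> pcoeffs \<Rightarrow> bool" where
  "poly_deg_le m c \<longleftrightarrow> (\<forall>i j. m < i + j \<longrightarrow> c i j = 0)"

definition in_chi :: "nat \<Rightarrow> pfield \<Rightarrow> bool" where
  "in_chi m X \<longleftrightarrow> poly_deg_le m (fst X) \<and> poly_deg_le m (snd X)"

definition deg_exactly :: "nat \<Rightarrow> pfield \<Rightarrow> bool" where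
  "deg_exactly m X \<longleftrightarrow> in_chi m X \<and>
     (\<exists>i j. i + j = m \<and> (fst X i j \<noteq> 0 \<or> snd X i j \<noteq> 0))"

definition Omega :: "nat \<Rightarrow> (pfield \<times> pfield) set" where
  "Omega m = {(X, Y). deg_exactly m X \<and> deg_exactly m Y}"

text \<open>Evaluation of a polynomial and its degree-m homogenisation
  z^m P(x/z, y/z) = sum c_ij x^i y^j z^(m-i-j).\<close>
definition peval :: "nat \<Rightarrow> pcoeffs \<Rightarrow> real \<Rightarrow> real \<Rightarrow> real" where
  "peval m c x y = (\<Sum>(i, j) \<in> {(i, j). i + j \<le> m}. c i j * x ^ i * y ^ j)"

definition phom :: "nat \<Rightarrow> pcoeffs \<Rightarrow> real ^ 3 \<Rightarrow> real" where
  "phom m c q = (\<Sum>(i, j) \<in> {(i, j). i + j \<le> m}.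
                   c i j * (q $ 1) ^ i * (q $ 2) ^ j * (q $ 3) ^ (m - i - j))"

lemma phom_peval:
  assumes "q $ 3 \<noteq> 0"
  shows "phom m c q = (q $ 3) ^ m * peval m c (q $ 1 / q $ 3) (q $ 2 / q $ 3)"
  unfolding phom_def peval_def sum_distrib_left
proof (rule sum.cong[OF refl], clarify)
  fix i j assume ij: "i + j \<le> m"
  have "(q $ 3) ^ m = (q $ 3) ^ i * (q $ 3) ^ j * (q $ 3) ^ (m - i - j)"
    using ij by (simp flip: power_add)
  then show "c i j * (q $ 1) ^ i * (q $ 2) ^ j * (q $ 3) ^ (m - i - j) =
    (q $ 3) ^ m * (c i j * (q $ 1 / q $ 3) ^ i * (q $ 2 / q $ 3) ^ j)"
    using assms by (simp add: field_simps)
qed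

definition sphere2 :: "(real ^ 3) set" where
  "sphere2 = {q. norm q = 1}"

definition upper_hemi :: "(real ^ 3) set" where
  "upper_hemi = {q \<in> sphere2. q $ 3 \<ge> 0}"

definition wp :: "real \<times> real \<Rightarrow> real ^ 3" where
  "wp uv = (1 / sqrt ((fst uv)\<^sup>2 + (snd uv)\<^sup>2 + 1)) *\<^sub>R vector [fst uv, snd uv, 1]"

text \<open>On S^2_+ this is z^(m-1) times the push-forward of X by wp (indeed
  D wp(u,v) h = z (h - <q,h> q) with q = wp(u,v), z = 1/sqrt(u^2+v^2+1)), and it is
  analytic on all of S^2, hence it is the unique analytic extension of the paper.
  Outside S^2 the formula provides a smooth (polynomial) extension to R^3, which is
  only used to speak of derivatives.\<close>
definition pcomp :: "nat \<Rightarrow> pfield \<Rightarrow> real ^ 3 \<Rightarrow> real ^ 3" where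
  "pcomp m X q =
     (let H = vector [phom m (fst X) q, phom m (snd X) q, 0] :: real ^ 3
      in H - (q \<bullet> H) *\<^sub>R q)"

text \<open>U f = <grad f, U> for f = y\<close>
definition Lie_f :: "(real ^ 3 \<Rightarrow> real ^ 3) \<Rightarrow> real ^ 3 \<Rightarrow> real" where
  "Lie_f U q = U q $ 2"

text \<open>det[U,V] on the sphere: the determinant of U(q), V(q) in the oriented tangent
  plane T_q S^2, i.e. the 3x3 determinant with rows U(q), V(q), q.\<close>
definition detUV :: "(real ^ 3 \<Rightarrow> real ^ 3) \<Rightarrow> (real ^ 3 \<Rightarrow> real ^ 3) \<Rightarrow> real ^ 3 \<Rightarrow> real" where
  "detUV U V q = det (vector [U q, V q, q] :: real ^ 3 ^ 3)"

definition Dcurve :: "real \<Rightarrow> real ^ 3" where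
  "Dcurve \<theta> = vector [cos \<theta>, 0, sin \<theta>]"

definition filippov_singular :: "(real ^ 3 \<Rightarrow> real ^ 3) \<Rightarrow> (real ^ 3 \<Rightarrow> real ^ 3) \<Rightarrow> real ^ 3 \<Rightarrow> bool" where
  "filippov_singular U V p \<longleftrightarrow>
     p \<in> sphere2 \<and> p $ 2 = 0 \<and> Lie_f U p * Lie_f V p < 0 \<and> detUV U V p = 0"

definition filippov_hyperbolic_singular ::
  "(real ^ 3 \<Rightarrow> real ^ 3) \<Rightarrow> (real ^ 3 \<Rightarrow> real ^ 3) \<Rightarrow> real ^ 3 \<Rightarrow> bool" where
  "filippov_hyperbolic_singular U V p \<longleftrightarrow>
     filippov_singular U V p \<and>
     (\<exists>\<theta>0 d. p = Dcurve \<theta>0 \<and> ((\<lambda>\<theta>. detUV U V (Dcurve \<theta>)) has_real_derivative d) (at \<theta>0)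
            \<and> d \<noteq> 0)"

definition transition_function :: "(real \<Rightarrow> real) \<Rightarrow> bool" where
  "transition_function \<phi> \<longleftrightarrow>
     (\<forall>n x. ((deriv ^^ n) \<phi>) differentiable (at x)) \<and>
     (\<forall>t \<le> -1. \<phi> t = 0) \<and> (\<forall>t \<ge> 1. \<phi> t = 1) \<and>
     (\<forall>t. -1 < t \<and> t < 1 \<longrightarrow> deriv \<phi> t > 0)"

definition reg_comp :: "nat \<Rightarrow> (real \<Rightarrow> real) \<Rightarrow> real \<Rightarrow> pfield \<times> pfield \<Rightarrow> real ^ 3 \<Rightarrow> real ^ 3" where
  "reg_comp m \<phi> \<epsilon> Z q =
     (1 - \<phi> (q $ 2 / \<epsilon>)) *\<^sub>R pcomp m (snd Z) q + \<phi> (q $ 2 / \<epsilon>) *\<^sub>R pcomp m (fst Z) q"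

text \<open>Trace and determinant do not depend on the choice of the basis.\<close>
definition tangent_linearization ::
  "(real ^ 3 \<Rightarrow> real ^ 3) \<Rightarrow> real ^ 3 \<Rightarrow> real ^ 3 \<Rightarrow> real ^ 3 \<Rightarrow> real \<times> real \<Rightarrow> bool" where
  "tangent_linearization W q e1 e2 td \<longleftrightarrow>
     (\<exists>L. (W has_derivative L) (at q) \<and>
        norm e1 = 1 \<and> norm e2 = 1 \<and> e1 \<bullet> e2 = 0 \<and> e1 \<bullet> q = 0 \<and> e2 \<bullet> q = 0 \<and>
        td = (e1 \<bullet> L e1 + e2 \<bullet> L e2,
              (e1 \<bullet> L e1) * (e2 \<bullet> L e2) - (e1 \<bullet> L e2) * (e2 \<bullet> L e1)))"

definition sing_point_S2 :: "(real ^ 3 \<Rightarrow> real ^ 3) \<Rightarrow> real ^ 3 \<Rightarrow> bool" where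
  "sing_point_S2 W q \<longleftrightarrow> q \<in> sphere2 \<and> W q = 0"

text \<open>hyperbolic saddle: real eigenvalues of opposite signs (det < 0)\<close>
definition hyperbolic_saddle :: "(real ^ 3 \<Rightarrow> real ^ 3) \<Rightarrow> real ^ 3 \<Rightarrow> bool" where
  "hyperbolic_saddle W q \<longleftrightarrow> sing_point_S2 W q \<and>
     (\<exists>e1 e2 tr dt. tangent_linearization W q e1 e2 (tr, dt) \<and> dt < 0)"

text \<open>hyperbolic node: real nonzero eigenvalues of the same sign (det > 0, tr^2 \<ge> 4 det)\<close>
definition hyperbolic_node :: "(real ^ 3 \<Rightarrow> real ^ 3) \<Rightarrow> real ^ 3 \<Rightarrow> bool" where
  "hyperbolic_node W q \<longleftrightarrow> sing_point_S2 W q \<and>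
     (\<exists>e1 e2 tr dt. tangent_linearization W q e1 e2 (tr, dt) \<and> dt > 0 \<and> tr\<^sup>2 \<ge> 4 * dt)"

end

theory Submission
  imports Defs
begin

(* Write U = P(X), V = P(Y) and Det q = det[U q, V q, q], which on S^2 vanishes exactly where
   U and V are parallel.  A zero q of W_eps = (1 - phi(y/eps)) V + phi(y/eps) U on S^2 near p
   satisfies (i) phi(q_y/eps) = V_y q / (V_y q - U_y q), a value close to
   t* = V_y p / (V_y p - U_y p) in (0,1), and (ii) Det q = 0.  In the chart
   (u,y) |-> sqrt(1-u^2-y^2) p + u E + y e_y around p the hyperbolicity of p says dDet/du (p) = d
   is nonzero, so in a small box {Det = 0} is the graph u = h(y) of a Lipschitz function.  The
   intermediate value theorem along this graph yields a zero of W_eps; since phi'/eps dominates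
   all other derivatives, the zero is unique.  The linearization of W_eps on the tangent plane has
   determinant (phi'/eps) K + O(1) with K close to d and trace (phi'/eps)(U_y - V_y) + O(1), so for
   small eps it is a saddle (det < 0) or a node (det > 0, tr^2 >= 4 det). *)

section \<open>Vectors in R^3 and the triple product\<close>

definition triple :: "real^3 \<Rightarrow> real^3 \<Rightarrow> real^3 \<Rightarrow> real" where
  "triple a b c = det (vector [a,b,c] :: real^3^3)"

lemma triple_expand:
  "triple a b c = a$1*(b$2*c$3 - b$3*c$2) - a$2*(b$1*c$3 - b$3*c$1) + a$3*(b$1*c$2 - b$2*c$1)"
  unfolding triple_def det_3 by (simp add: algebra_simps)

lemma inner3: "(x::real^3) \<bullet> y = x$1*y$1 + x$2*y$2 + x$3*y$3"
  by (simp add: inner_vec_def sum_3)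

lemma norm3: "norm (x::real^3) = sqrt (x$1^2 + x$2^2 + x$3^2)"
  by (simp add: norm_eq_sqrt_inner inner3 power2_eq_square)

lemma vec3_eq: "(x::real^3) = y \<longleftrightarrow> x$1=y$1 \<and> x$2=y$2 \<and> x$3=y$3"
  by (simp add: vec_eq_iff forall_3)

lemma vector3_axis: "(vector [a,b,c] :: real^3) = a *\<^sub>R axis 1 1 + b *\<^sub>R axis 2 1 + c *\<^sub>R axis 3 1"
  by (simp add: vec3_eq axis_def)

lemma has_derivative_nth[derivative_intros]:
  "(f has_derivative f') F \<Longrightarrow> ((\<lambda>x. f x $ i) has_derivative (\<lambda>h. f' h $ i)) F"
  by (rule bounded_linear.has_derivative[OF bounded_linear_vec_nth])

lemma has_derivative_vector3[derivative_intros]: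
  assumes "(f has_derivative f') F" "(g has_derivative g') F" "(k has_derivative k') F"
  shows "((\<lambda>x. vector [f x, g x, k x] :: real^3) has_derivative (\<lambda>h. vector [f' h, g' h, k' h])) F"
  unfolding vector3_axis
  by (rule has_derivative_eq_rhs, (rule derivative_intros assms)+) (simp add: vec3_eq axis_def)

lemma continuous_vector3[continuous_intros]:
  assumes "continuous F f" "continuous F g" "continuous F h"
  shows "continuous F (\<lambda>x. vector [f x, g x, h x] :: real^3)"
  unfolding vector3_axis by (intro continuous_intros assms)

lemma triple_linear_left: "triple (a *\<^sub>R x + b *\<^sub>R y) z w = a * triple x z w + b * triple y z w"
  by (simp add: triple_expand algebra_simps)

lemma triple_repeated: "triple x x w = 0"
  by (simp add: triple_expand algebra_simps)

lemma triple_equator_zero: "a$3 = 0 \<Longrightarrow> b$3 = 0 \<Longrightarrow> c$3 = 0 \<Longrightarrow> triple a b c = 0"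
  by (simp add: triple_expand)

text \<open>This is
  how "W_y = 0 and det[U,V] = 0" is turned into "W = 0".\<close>
lemma horizontal_parallel_tangent_zero:
  fixes Z V q :: "real^3"
  assumes "q \<bullet> q = 1" "q$1^2 + q$3^2 > 0" "Z \<bullet> q = 0" "V \<bullet> q = 0" "Z$2 = 0" "V$2 \<noteq> 0"
    "triple Z V q = 0"
  shows "Z = 0"
proof -
  have e1: "Z$1*q$1 + Z$3*q$3 = 0" using assms(3,5) by (simp add: inner3)
  have e2: "V$1*q$1 + V$2*q$2 + V$3*q$3 = 0" using assms(4) by (simp add: inner3)
  have e3: "q$1^2+q$2^2+q$3^2 = 1" using assms(1) by (simp add: inner3 power2_eq_square)
  have e4: "Z$1*(V$2*q$3 - V$3*q$2) + Z$3*(V$1*q$2 - V$2*q$1) = 0"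
    using assms(7,5) by (simp add: triple_expand)
  have "V$2 * (Z$1*q$3 - Z$3*q$1) * (q$1^2+q$3^2) = 0"
    using e1 e2 e3 e4 by algebra
  then have e5: "Z$1*q$3 - Z$3*q$1 = 0"
    using assms(2,6) by (metis mult_eq_0_iff order_less_irrefl)
  have "Z$1 * (q$1^2+q$3^2) = 0" "Z$3 * (q$1^2+q$3^2) = 0" using e1 e5 by algebra+
  then have "Z$1 = 0" "Z$3 = 0" using assms(2) by (metis mult_eq_0_iff order_less_irrefl)+
  then show ?thesis using assms(5) by (simp add: vec3_eq)
qed

text \<open>Product rule for det[U,V,q] at a point where t U + (1-t) V = 0: the derivative equals
  det[U - V, t U' + (1-t) V', q].  This identifies the hyperbolicity constant d.\<close>
lemma triple_derivative_at_balance: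
  fixes U V a b e p :: "real^3" and t :: real
  assumes "t *\<^sub>R U + (1-t) *\<^sub>R V = 0" "t \<noteq> 0"
  shows "triple a V p + triple U b p + triple U V e = triple (U - V) (t *\<^sub>R a + (1-t) *\<^sub>R b) p"
proof -
  have c: "t*U$1 + (1-t)*V$1 = 0" "t*U$2 + (1-t)*V$2 = 0" "t*U$3 + (1-t)*V$3 = 0"
    using assms(1) by (simp_all add: vec3_eq)
  have "t * (triple a V p + triple U b p + triple U V e) = t * triple (U - V) (t *\<^sub>R a + (1-t) *\<^sub>R b) p"
    unfolding triple_expand using c by simp algebra
  then show ?thesis using assms(2) by simp
qed

lemma triple_equatorial:
  fixes w x p :: "real^3"
  assumes "p$2 = 0"
  shows "triple w x p = (vector [-p$3,0,p$1] \<bullet> x) * w$2 - (vector [-p$3,0,p$1] \<bullet> w) * x$2"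
  using assms by (simp add: triple_expand inner3 algebra_simps)

section \<open>Derivative of the Poincare compactification\<close>

definition dphom :: "nat \<Rightarrow> pcoeffs \<Rightarrow> real ^ 3 \<Rightarrow> real ^ 3 \<Rightarrow> real" where
  "dphom m c q h = (\<Sum>(i, j) \<in> {(i, j). i + j \<le> m}.
      c i j * (real i * (q$1)^(i-1) * h$1 * (q$2)^j * (q$3)^(m-i-j)
             + (q$1)^i * (real j * (q$2)^(j-1) * h$2) * (q$3)^(m-i-j)
             + (q$1)^i * (q$2)^j * (real (m-i-j) * (q$3)^(m-i-j-1) * h$3)))"

lemma monomial_has_derivative:
  "((\<lambda>q::real^3. c * (q$1)^i * (q$2)^j * (q$3)^k) has_derivative
     (\<lambda>h. c * (real i * (q$1)^(i-1) * h$1 * (q$2)^j * (q$3)^k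
             + (q$1)^i * (real j * (q$2)^(j-1) * h$2) * (q$3)^k
             + (q$1)^i * (q$2)^j * (real k * (q$3)^(k-1) * h$3)))) (at q)"
  by (rule has_derivative_eq_rhs, (rule derivative_intros)+) (auto simp: algebra_simps)

lemma phom_has_derivative: "(phom m c has_derivative dphom m c q) (at q)"
  unfolding phom_def dphom_def
proof (rule has_derivative_sum)
  fix ij :: "nat \<times> nat"
  obtain i j where "ij = (i,j)" by fastforce
  then show "((\<lambda>x. case ij of (i, j) \<Rightarrow> c i j * x $ 1 ^ i * x $ 2 ^ j * x $ 3 ^ (m - i - j))
      has_derivative (\<lambda>h. case ij of (i, j) \<Rightarrow>
        c i j * (real i * (q$1)^(i-1) * h$1 * (q$2)^j * (q$3)^(m-i-j)
             + (q$1)^i * (real j * (q$2)^(j-1) * h$2) * (q$3)^(m-i-j)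
             + (q$1)^i * (q$2)^j * (real (m-i-j) * (q$3)^(m-i-j-1) * h$3)))) (at q)"
    by (simp only: prod.case monomial_has_derivative)
qed

definition hom_field :: "nat \<Rightarrow> pfield \<Rightarrow> real^3 \<Rightarrow> real^3" where
  "hom_field m X q = vector [phom m (fst X) q, phom m (snd X) q, 0]"

definition d_hom_field :: "nat \<Rightarrow> pfield \<Rightarrow> real^3 \<Rightarrow> real^3 \<Rightarrow> real^3" where
  "d_hom_field m X q h = vector [dphom m (fst X) q h, dphom m (snd X) q h, 0]"

definition dpcomp :: "nat \<Rightarrow> pfield \<Rightarrow> real^3 \<Rightarrow> real^3 \<Rightarrow> real^3" where
  "dpcomp m X q h = d_hom_field m X q h
     - (h \<bullet> hom_field m X q + q \<bullet> d_hom_field m X q h) *\<^sub>R q - (q \<bullet> hom_field m X q) *\<^sub>R h"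

lemma pcomp_hom_field: "pcomp m X q = hom_field m X q - (q \<bullet> hom_field m X q) *\<^sub>R q"
  by (simp add: pcomp_def hom_field_def Let_def)

lemma pcomp_has_derivative: "(pcomp m X has_derivative dpcomp m X q) (at q)"
proof -
  have H: "(hom_field m X has_derivative d_hom_field m X q) (at q)"
    unfolding hom_field_def d_hom_field_def
    by (intro has_derivative_vector3 phom_has_derivative has_derivative_const)
  show ?thesis
    unfolding pcomp_hom_field[abs_def] dpcomp_def
    by (rule has_derivative_eq_rhs, (rule derivative_intros H)+) (auto simp: algebra_simps inner_commute)
qed

lemma dpcomp_continuous: "continuous_on UNIV (\<lambda>z. dpcomp m X (fst z) (snd z))"
  unfolding dpcomp_def d_hom_field_def hom_field_def vector3_axis phom_def dphom_def split_def
  by (intro continuous_intros)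

lemma pcomp_tangent: "norm q = 1 \<Longrightarrow> q \<bullet> pcomp m X q = 0"
  unfolding pcomp_hom_field by (simp add: inner_diff_right norm_eq_sqrt_inner)

lemma pcomp_equator: "q$3 = 0 \<Longrightarrow> pcomp m X q $ 3 = 0"
  unfolding pcomp_hom_field hom_field_def by simp

lemma continuous_at_compose_UNIV:
  fixes g :: "'a::metric_space \<Rightarrow> 'b::metric_space" and f :: "'c::metric_space \<Rightarrow> 'a"
  assumes "continuous_on UNIV g" "continuous (at x) f"
  shows "continuous (at x) (\<lambda>x. g (f x))"
proof -
  have "isCont g (f x)" using assms(1) continuous_on_eq_continuous_at[OF open_UNIV] by blast
  then show ?thesis using continuous_at_compose[of x f g] assms(2) by (simp add: o_def)
qed

lemma continuous_at_compose2_UNIV: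
  fixes g :: "'a::metric_space \<Rightarrow> 'b::metric_space \<Rightarrow> 'c::metric_space"
    and f :: "'d::metric_space \<Rightarrow> 'a" and h :: "'d \<Rightarrow> 'b"
  assumes "continuous_on UNIV (\<lambda>z. g (fst z) (snd z))" "continuous (at x) f" "continuous (at x) h"
  shows "continuous (at x) (\<lambda>x. g (f x) (h x))"
  using continuous_at_compose_UNIV[OF assms(1), of x "\<lambda>x. (f x, h x)"] assms(2,3)
  by (simp add: continuous_Pair)

lemma continuous_at_eventually_close:
  fixes f :: "'a::metric_space \<Rightarrow> real"
  assumes "continuous (at x) f" "e > 0"
  shows "eventually (\<lambda>z. \<bar>f z - f x\<bar> < e) (nhds x)"
proof -
  have "(f \<longlongrightarrow> f x) (nhds x)"
    using assms(1) by (simp add: continuous_at tendsto_at_iff_tendsto_nhds)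
  from tendstoD[OF this assms(2)] show ?thesis by (simp add: dist_real_def)
qed

lemma eventually_nhds_radius:
  fixes x0 :: "'a::real_normed_vector"
  assumes "eventually P (nhds x0)"
  shows "\<exists>r>0. \<forall>x. norm (x - x0) < r \<longrightarrow> P x"
  using assms unfolding eventually_nhds_metric by (simp add: dist_norm)

lemma eventually_nhds_pair_radius:
  fixes x0 :: "'a::real_normed_vector" and y0 :: "'b::real_normed_vector"
  assumes "eventually P (nhds (x0, y0))"
  shows "\<exists>r>0. \<forall>x y. norm (x - x0) < r \<longrightarrow> norm (y - y0) < r \<longrightarrow> P (x, y)"
proof -
  obtain r where r: "r > 0" "\<forall>z. dist z (x0, y0) < r \<longrightarrow> P z"
    using assms unfolding eventually_nhds_metric by blast
  have "P (x, y)" if "norm (x - x0) < r/2" "norm (y - y0) < r/2" for x y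
  proof -
    have "dist (x, y) (x0, y0) \<le> dist x x0 + dist y y0"
      unfolding dist_Pair_Pair by (rule sqrt_sum_squares_le_sum) auto
    then show ?thesis using r that by (simp add: dist_norm)
  qed
  then show ?thesis using r(1) by (intro exI[of _ "r/2"]) auto
qed

lemma mvt_abs_bound:
  fixes f f' :: "real \<Rightarrow> real"
  assumes d: "\<And>x. lo \<le> x \<Longrightarrow> x \<le> hi \<Longrightarrow> (f has_real_derivative f' x) (at x)"
    and b: "\<And>x. lo \<le> x \<Longrightarrow> x \<le> hi \<Longrightarrow> \<bar>f' x\<bar> \<le> B"
    and x: "lo \<le> x1" "x1 \<le> hi" "lo \<le> x2" "x2 \<le> hi"
  shows "\<bar>f x1 - f x2\<bar> \<le> B * \<bar>x1 - x2\<bar>"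
proof -
  have *: "\<bar>f y - f x\<bar> \<le> B * \<bar>y - x\<bar>" if "lo \<le> x" "x < y" "y \<le> hi" for x y
  proof -
    have "\<exists>z>x. z < y \<and> f y - f x = (y - x) * f' z"
      by (rule MVT2[OF \<open>x < y\<close>]) (use d that in auto)
    then obtain z where z: "x < z" "z < y" "f y - f x = (y - x) * f' z" by blast
    have "\<bar>f' z\<bar> \<le> B" using b z that by auto
    then have "\<bar>(y - x) * f' z\<bar> \<le> \<bar>y - x\<bar> * B" by (simp add: abs_mult mult_left_mono)
    then show ?thesis using z by (simp add: mult.commute)
  qed
  consider "x1 = x2" | "x1 < x2" | "x2 < x1" by linarith
  then show ?thesis
  proof cases
    case 2 then show ?thesis using *[of x1 x2] x by (simp add: abs_minus_commute)
  next
    case 3 then show ?thesis using *[of x2 x1] x by simp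
  qed simp
qed

lemma mvt_lower_bound:
  fixes f f' :: "real \<Rightarrow> real"
  assumes d: "\<And>x. lo \<le> x \<Longrightarrow> x \<le> hi \<Longrightarrow> (f has_real_derivative f' x) (at x)"
    and b: "\<And>x. lo \<le> x \<Longrightarrow> x \<le> hi \<Longrightarrow> f' x \<ge> c"
    and x: "lo \<le> x1" "x1 \<le> x2" "x2 \<le> hi"
  shows "f x2 - f x1 \<ge> c * (x2 - x1)"
proof (cases "x1 = x2")
  case False
  then have "x1 < x2" using x by simp
  have "\<exists>z>x1. z < x2 \<and> f x2 - f x1 = (x2 - x1) * f' z"
    by (rule MVT2[OF \<open>x1 < x2\<close>]) (use d x in auto)
  then obtain z where z: "x1 < z" "z < x2" "f x2 - f x1 = (x2 - x1) * f' z" by blast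
  have "f' z \<ge> c" using b z x by auto
  then show ?thesis using z \<open>x1 < x2\<close> by (simp add: mult.commute mult_right_mono)
qed simp

lemma transition_has_derivative:
  "transition_function \<phi> \<Longrightarrow> (\<phi> has_real_derivative deriv \<phi> x) (at x)"
proof -
  assume "transition_function \<phi>"
  then have "((deriv ^^ 0) \<phi>) differentiable (at x)" unfolding transition_function_def by blast
  then show ?thesis by (simp add: DERIV_deriv_iff_real_differentiable)
qed

lemma transition_deriv_continuous: "transition_function \<phi> \<Longrightarrow> continuous_on UNIV (deriv \<phi>)"
proof -
  assume "transition_function \<phi>"
  then have "\<And>x. ((deriv ^^ 1) \<phi>) differentiable (at x)" unfolding transition_function_def by blast
  then have "\<And>x. isCont (deriv \<phi>) x" by (simp add: differentiable_imp_continuous_within)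
  then show ?thesis by (simp add: continuous_at_imp_continuous_on)
qed

lemma transition_continuous: "transition_function \<phi> \<Longrightarrow> continuous_on UNIV \<phi>"
  by (meson DERIV_isCont continuous_at_imp_continuous_on transition_has_derivative)

lemma transition_strict_mono:
  assumes tf: "transition_function \<phi>" and ab: "-1 \<le> a" "a < b" "b \<le> 1"
  shows "\<phi> a < \<phi> b"
proof -
  obtain z where z: "a < z" "z < b" "\<phi> b - \<phi> a = (b - a) * deriv \<phi> z"
    using MVT2[OF \<open>a < b\<close> transition_has_derivative[OF tf]] by blast
  have "deriv \<phi> z > 0" using tf z ab unfolding transition_function_def by auto
  then have "(b - a) * deriv \<phi> z > 0" using ab by simp
  then show ?thesis using z by simp
qed

lemma transition_clamp:
  assumes tf: "transition_function \<phi>"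
  shows "\<phi> x = \<phi> (max (-1) (min 1 x))"
proof -
  have z: "\<forall>t \<le> -1. \<phi> t = 0" and o: "\<forall>t \<ge> 1. \<phi> t = 1"
    using tf unfolding transition_function_def by auto
  consider "x \<le> -1" | "x \<ge> 1" | "-1 < x \<and> x < 1" by linarith
  then show ?thesis
  proof cases
    case 1 then have "max (-1) (min 1 x) = -1" by simp
    then show ?thesis using z 1 by simp
  next
    case 2 then have "max (-1) (min 1 x) = 1" by simp
    then show ?thesis using o 2 by simp
  next
    case 3 then have "max (-1) (min 1 x) = x" by simp
    then show ?thesis by simp
  qed
qed

lemma transition_mono:
  assumes tf: "transition_function \<phi>" and "x \<le> y"
  shows "\<phi> x \<le> \<phi> y"
proof -
  define a where "a = max (-1) (min 1 x)"
  define b where "b = max (-1) (min 1 y)"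
  have ab: "a \<le> b" "-1 \<le> a" "b \<le> 1" using assms(2) unfolding a_def b_def by linarith+
  have "\<phi> a \<le> \<phi> b"
  proof (cases "a < b")
    case True then show ?thesis using transition_strict_mono[OF tf ab(2) True ab(3)] by simp
  qed (use ab in simp)
  then show ?thesis using transition_clamp[OF tf, of x] transition_clamp[OF tf, of y]
    unfolding a_def b_def by simp
qed

lemma transition_range:
  assumes tf: "transition_function \<phi>"
  shows "0 \<le> \<phi> x" "\<phi> x \<le> 1"
proof -
  have "\<phi> (-1) = 0" "\<phi> 1 = 1" using tf unfolding transition_function_def by auto
  then show "0 \<le> \<phi> x" "\<phi> x \<le> 1"
    using transition_mono[OF tf, of "-1" "max (-1) (min 1 x)"]
      transition_mono[OF tf, of "max (-1) (min 1 x)" 1] transition_clamp[OF tf, of x] by auto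
qed

lemma transition_interior:
  assumes tf: "transition_function \<phi>" and "0 < \<phi> s" "\<phi> s < 1"
  shows "-1 < s" "s < 1"
proof -
  have z: "\<forall>t \<le> -1. \<phi> t = 0" and o: "\<forall>t \<ge> 1. \<phi> t = 1"
    using tf unfolding transition_function_def by auto
  show "-1 < s" using z assms(2) by (metis linorder_not_le order_less_irrefl)
  show "s < 1" using o assms(3) by (metis linorder_not_le order_less_irrefl)
qed

text \<open>On the compact set where phi takes values in [t1,t2] inside (0,1), phi' has a positive
  lower bound.  This is what makes phi'/eps large at every singular point.\<close>
lemma transition_deriv_lower_bound:
  assumes tf: "transition_function \<phi>" and t: "0 < t1" "t2 < 1"
  shows "\<exists>c>0. \<forall>s. t1 \<le> \<phi> s \<and> \<phi> s \<le> t2 \<longrightarrow> c \<le> deriv \<phi> s"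
proof -
  define S where "S = {s. t1 \<le> \<phi> s \<and> \<phi> s \<le> t2}"
  have Ssub: "S \<subseteq> {-1..1}"
  proof
    fix s assume "s \<in> S"
    then have "0 < \<phi> s" "\<phi> s < 1" using t unfolding S_def by auto
    then show "s \<in> {-1..1}" using transition_interior[OF tf] by (auto intro: less_imp_le)
  qed
  have "closed S" unfolding S_def
    using transition_continuous[OF tf]
    by (intro closed_Collect_conj closed_Collect_le) (auto intro: continuous_on_subset)
  then have "compact S" using Ssub
    by (meson compact_Icc compact_imp_bounded bounded_subset compact_eq_bounded_closed)
  show ?thesis
  proof (cases "S = {}")
    case True then show ?thesis unfolding S_def by (intro exI[of _ 1]) auto
  next
    case False
    obtain s0 where s0: "s0 \<in> S" "\<forall>s\<in>S. deriv \<phi> s0 \<le> deriv \<phi> s"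
      using continuous_attains_inf[OF \<open>compact S\<close> False
          continuous_on_subset[OF transition_deriv_continuous[OF tf]]] by auto
    have "0 < \<phi> s0" "\<phi> s0 < 1" using s0(1) t unfolding S_def by auto
    then have "-1 < s0" "s0 < 1" using transition_interior[OF tf] by auto
    then have "deriv \<phi> s0 > 0" using tf unfolding transition_function_def by auto
    then show ?thesis using s0 unfolding S_def by auto
  qed
qed

section \<open>Two C^1 fields tangent to the sphere\<close>

text \<open>The hypotheses on U = P(X), V = P(Y) that the argument uses: both are C^1 on R^3 (with
  derivatives DU, DV depending continuously on point and direction), tangent to S^2, and they
  leave the equator z = 0 invariant.\<close>
locale tangent_fields =
  fixes U V :: "real^3 \<Rightarrow> real^3" and DU DV :: "real^3 \<Rightarrow> real^3 \<Rightarrow> real^3"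
  assumes dU: "\<And>q. (U has_derivative DU q) (at q)"
    and dV: "\<And>q. (V has_derivative DV q) (at q)"
    and cU: "continuous_on UNIV (\<lambda>z. DU (fst z) (snd z))"
    and cV: "continuous_on UNIV (\<lambda>z. DV (fst z) (snd z))"
    and tU: "\<And>q. q \<in> sphere2 \<Longrightarrow> q \<bullet> U q = 0"
    and tV: "\<And>q. q \<in> sphere2 \<Longrightarrow> q \<bullet> V q = 0"
    and eU: "\<And>q. q$3 = 0 \<Longrightarrow> U q $ 3 = 0"
    and eV: "\<And>q. q$3 = 0 \<Longrightarrow> V q $ 3 = 0"
begin

definition "Det q = triple (U q) (V q) q"
definition "dDet q h = triple (DU q h) (V q) q + triple (U q) (DV q h) q + triple (U q) (V q) h"

lemma U_cont: "continuous_on UNIV U"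
  by (meson continuous_at_imp_continuous_on dU has_derivative_continuous)
lemma V_cont: "continuous_on UNIV V"
  by (meson continuous_at_imp_continuous_on dV has_derivative_continuous)

lemma U_at: "continuous (at x) f \<Longrightarrow> continuous (at x) (\<lambda>x. U (f x))"
  for f :: "'a::metric_space \<Rightarrow> real^3"
  by (rule continuous_at_compose_UNIV[OF U_cont])
lemma V_at: "continuous (at x) f \<Longrightarrow> continuous (at x) (\<lambda>x. V (f x))"
  for f :: "'a::metric_space \<Rightarrow> real^3"
  by (rule continuous_at_compose_UNIV[OF V_cont])
lemma DU_at: "continuous (at x) f \<Longrightarrow> continuous (at x) g \<Longrightarrow> continuous (at x) (\<lambda>x. DU (f x) (g x))"
  for f g :: "'a::metric_space \<Rightarrow> real^3"
  by (rule continuous_at_compose2_UNIV[OF cU])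
lemma DV_at: "continuous (at x) f \<Longrightarrow> continuous (at x) g \<Longrightarrow> continuous (at x) (\<lambda>x. DV (f x) (g x))"
  for f g :: "'a::metric_space \<Rightarrow> real^3"
  by (rule continuous_at_compose2_UNIV[OF cV])

lemma Un_deriv: "((\<lambda>q. U q $ i) has_derivative (\<lambda>h. DU q h $ i)) (at q)"
  by (rule has_derivative_nth[OF dU])
lemma Vn_deriv: "((\<lambda>q. V q $ i) has_derivative (\<lambda>h. DV q h $ i)) (at q)"
  by (rule has_derivative_nth[OF dV])
lemma idn_deriv: "((\<lambda>q::real^3. q $ i) has_derivative (\<lambda>h. h $ i)) (at q)"
  by (rule has_derivative_nth[OF has_derivative_ident])

lemma Det_has_derivative: "(Det has_derivative dDet q) (at q)"
  unfolding Det_def[abs_def] dDet_def triple_expand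
  by (rule has_derivative_eq_rhs, (rule Un_deriv Vn_deriv idn_deriv derivative_eq_intros(1-30) refl)+)
    (simp add: algebra_simps)

lemma dDet_continuous: "continuous_on UNIV (\<lambda>z. dDet (fst z) (snd z))"
proof -
  have D: "continuous_on UNIV (\<lambda>z. DU (fst z) (snd z) $ i)" "continuous_on UNIV (\<lambda>z. DV (fst z) (snd z) $ i)"
    for i by (intro continuous_on_component cU cV)+
  have F: "continuous_on UNIV (\<lambda>z. U (fst z) $ i)" "continuous_on UNIV (\<lambda>z. V (fst z) $ i)" for i
    by (intro continuous_on_component continuous_on_compose2[OF U_cont] continuous_on_compose2[OF V_cont]
        continuous_intros; simp)+
  show ?thesis
    unfolding dDet_def triple_expand
    by (intro continuous_on_add continuous_on_diff continuous_on_mult D F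
        continuous_on_component continuous_on_fst continuous_on_snd continuous_on_id)
qed

end

lemma has_real_derivative_along_curve:
  fixes f :: "'a::real_normed_vector \<Rightarrow> real"
  assumes "(g has_derivative (\<lambda>s. s *\<^sub>R v)) (at x)" "(f has_derivative Df) (at (g x))"
  shows "((\<lambda>x. f (g x)) has_real_derivative Df v) (at x)"
proof -
  have "((\<lambda>x. f (g x)) has_derivative (\<lambda>s. Df (s *\<^sub>R v))) (at x)"
    by (rule has_derivative_compose[OF assms])
  moreover have "(\<lambda>s. Df (s *\<^sub>R v)) = (\<lambda>s. s * Df v)"
    using linear_scale[OF has_derivative_linear[OF assms(2)]] by auto
  ultimately show ?thesis by (simp add: has_field_derivative_def mult_commute_abs)
qed

text \<open>For p on S^2 with p_y = 0 the vectors p, E = (-p_3,0,p_1), e_y are orthonormal, and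
  (u,y) \<mapsto> sqrt(1-u^2-y^2) p + u E + y e_y parametrizes the open hemisphere centred at p.\<close>
locale chart_at = tangent_fields +
  fixes p :: "real^3"
  assumes pp: "p \<bullet> p = 1" and p2: "p$2 = 0"
begin

definition "E = (vector [-p$3, 0, p$1] :: real^3)"
definition "ey = (vector [0, 1, 0] :: real^3)"
definition "chart_weight u y = sqrt (1 - u^2 - y^2)"
definition "chart u y = chart_weight u y *\<^sub>R p + u *\<^sub>R E + y *\<^sub>R ey"
definition "chart_du u y = (-(u / chart_weight u y)) *\<^sub>R p + E"
definition "chart_dy u y = (-(y / chart_weight u y)) *\<^sub>R p + ey"

lemma p13: "p$1^2 + p$3^2 = 1"
  using pp p2 by (simp add: inner3 power2_eq_square)

lemma chart_components: "chart u y $ 1 = chart_weight u y * p$1 - u * p$3" "chart u y $ 2 = y" "chart u y $ 3 = chart_weight u y * p$3 + u * p$1"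
  by (simp_all add: chart_def E_def ey_def p2)

lemma chart_inner_E: "chart u y \<bullet> E = u"
proof -
  have "chart u y \<bullet> E = u * (p$1^2 + p$3^2)"
    by (simp add: inner3 chart_components E_def algebra_simps power2_eq_square)
  then show ?thesis using p13 by simp
qed

lemma chart_inner_p: "chart u y \<bullet> p = chart_weight u y"
proof -
  have "chart u y \<bullet> p = chart_weight u y * (p$1^2 + p$3^2)"
    by (simp add: inner3 chart_components p2 algebra_simps power2_eq_square)
  then show ?thesis using p13 by simp
qed

lemma chart_weight_sq: "u^2 + y^2 \<le> 1 \<Longrightarrow> (chart_weight u y)^2 = 1 - u^2 - y^2"
  by (simp add: chart_weight_def)

lemma chart_on_sphere: assumes "u^2 + y^2 \<le> 1" shows "chart u y \<bullet> chart u y = 1"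
proof -
  have "chart u y \<bullet> chart u y = (chart_weight u y)^2 * (p$1^2 + p$3^2) + u^2 * (p$1^2 + p$3^2) + y^2"
    by (simp add: inner3 chart_components algebra_simps power2_eq_square)
  then show ?thesis using p13 chart_weight_sq[OF assms] by simp
qed

lemma chart_weight_ge: "u^2 + y^2 \<le> 1/2 \<Longrightarrow> chart_weight u y \<ge> 1/2"
  unfolding chart_weight_def by (rule real_le_rsqrt) (simp add: power2_eq_square)

lemma chart_weight_le: "chart_weight u y \<le> 1"
  unfolding chart_weight_def by (simp add: real_sqrt_le_1_iff add_nonneg_nonneg)

lemma normE: "norm E = 1" and normey: "norm ey = 1" and normp: "norm p = 1"
  using p13 pp p2 by (simp_all add: norm3 E_def ey_def norm_eq_sqrt_inner)


lemma chart_inverse: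
  assumes "q \<bullet> q = 1" "q \<bullet> p > 0"
  shows "q = chart (q \<bullet> E) (q$2)" "(q \<bullet> E)^2 + (q$2)^2 < 1"
proof -
  have q1: "q$1^2 + q$2^2 + q$3^2 = 1" using assms(1) by (simp add: inner3 power2_eq_square)
  have qp: "q \<bullet> p = q$1*p$1 + q$3*p$3" by (simp add: inner3 p2)
  have qE: "q \<bullet> E = -q$1*p$3 + q$3*p$1" by (simp add: inner3 E_def)
  have id: "(q \<bullet> p)^2 + (q \<bullet> E)^2 + (q$2)^2 = 1"
  proof -
    have "(q \<bullet> p)^2 + (q \<bullet> E)^2 + (q$2)^2 = (q$1^2 + q$3^2)*(p$1^2+p$3^2) + q$2^2"
      unfolding qp qE by (simp add: algebra_simps power2_eq_square)
    then show ?thesis using p13 q1 by simp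
  qed
  then show "(q \<bullet> E)^2 + (q$2)^2 < 1" using assms(2) by (smt (verit) zero_less_power)
  have n: "chart_weight (q \<bullet> E) (q$2) = q \<bullet> p"
    unfolding chart_weight_def using id assms(2) by (simp add: real_sqrt_unique algebra_simps)
  have a1: "q$1 = (q$1*p$1 + q$3*p$3) * p$1 - (-q$1*p$3 + q$3*p$1) * p$3"
    using p13 by algebra
  have a3: "q$3 = (q$1*p$1 + q$3*p$3) * p$3 + (-q$1*p$3 + q$3*p$1) * p$1"
    using p13 by algebra
  have b1: "q$1 = (q \<bullet> p) * p$1 - (q \<bullet> E) * p$3" using a1 qp qE by simp
  have b3: "q$3 = (q \<bullet> p) * p$3 + (q \<bullet> E) * p$1" using a3 qp qE by simp
  show "q = chart (q \<bullet> E) (q$2)"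
    unfolding vec3_eq chart_components n using b1 b3 by simp
qed

lemma chart_dist:
  assumes "u^2 + y^2 \<le> 1" "\<bar>u\<bar> \<le> 1" "\<bar>y\<bar> \<le> 1"
  shows "norm (chart u y - p) \<le> 2 * (\<bar>u\<bar> + \<bar>y\<bar>)"
proof -
  have "chart u y - p = (chart_weight u y - 1) *\<^sub>R p + u *\<^sub>R E + y *\<^sub>R ey"
    by (simp add: chart_def algebra_simps)
  then have "norm (chart u y - p) \<le> \<bar>chart_weight u y - 1\<bar> + \<bar>u\<bar> + \<bar>y\<bar>"
    using norm_triangle_ineq[of "(chart_weight u y - 1) *\<^sub>R p + u *\<^sub>R E" "y *\<^sub>R ey"]
      norm_triangle_ineq[of "(chart_weight u y - 1) *\<^sub>R p" "u *\<^sub>R E"]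
    by (simp add: normE normey normp)
  moreover have "\<bar>chart_weight u y - 1\<bar> \<le> u^2 + y^2"
  proof -
    have "0 \<le> chart_weight u y" "chart_weight u y \<le> 1" using chart_weight_le assms(1) by (auto simp: chart_weight_def)
    then have "1 - chart_weight u y \<le> 1 - (chart_weight u y)^2" by (simp add: power2_eq_square mult_left_le_one_le)
    then show ?thesis using chart_weight_sq[OF assms(1)] \<open>chart_weight u y \<le> 1\<close> by simp
  qed
  moreover have "u^2 \<le> \<bar>u\<bar>" "y^2 \<le> \<bar>y\<bar>"
    using assms(2,3) mult_left_le_one_le[of "\<bar>u\<bar>" "\<bar>u\<bar>"] mult_left_le_one_le[of "\<bar>y\<bar>" "\<bar>y\<bar>"]
    by (simp_all add: power2_eq_square abs_mult_self_eq)
  ultimately show ?thesis by (smt (verit))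
qed

lemma chart_du_dist: assumes "u^2 + y^2 \<le> 1/2" shows "norm (chart_du u y - E) \<le> 2 * \<bar>u\<bar>"
proof -
  have n: "chart_weight u y \<ge> 1/2" by (rule chart_weight_ge[OF assms])
  have "norm (chart_du u y - E) = \<bar>u\<bar> / chart_weight u y" using n by (simp add: chart_du_def normp abs_div)
  also have "\<dots> \<le> \<bar>u\<bar> / (1/2)" by (rule divide_left_mono) (use n in auto)
  finally show ?thesis by simp
qed

lemma chart_dy_dist: assumes "u^2 + y^2 \<le> 1/2" shows "norm (chart_dy u y - ey) \<le> 2 * \<bar>y\<bar>"
proof -
  have n: "chart_weight u y \<ge> 1/2" by (rule chart_weight_ge[OF assms])
  have "norm (chart_dy u y - ey) = \<bar>y\<bar> / chart_weight u y" using n by (simp add: chart_dy_def normp abs_div)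
  also have "\<dots> \<le> \<bar>y\<bar> / (1/2)" by (rule divide_left_mono) (use n in auto)
  finally show ?thesis by simp
qed

lemma chart_has_derivative_u: assumes "u^2 + y^2 < 1"
  shows "((\<lambda>u. chart u y) has_derivative (\<lambda>s. s *\<^sub>R chart_du u y)) (at u)"
proof -
  have pos: "1 - u^2 - y^2 > 0" using assms by simp
  have "((\<lambda>u. 1 - u^2 - y^2) has_real_derivative (-2*u)) (at u)"
    by (auto intro!: derivative_eq_intros)
  from DERIV_chain2[OF DERIV_real_sqrt[OF pos] this]
  have "((\<lambda>u. chart_weight u y) has_real_derivative (-(u / chart_weight u y))) (at u)"
    unfolding chart_weight_def by (simp add: field_simps)
  then have a: "((\<lambda>u. chart_weight u y *\<^sub>R p) has_vector_derivative (-(u / chart_weight u y)) *\<^sub>R p) (at u)"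
    unfolding has_real_derivative_iff_has_vector_derivative
    by (rule bounded_linear.has_vector_derivative[OF bounded_linear_scaleR_left])
  have b: "((\<lambda>u. u *\<^sub>R E) has_vector_derivative E) (at u)"
    using bounded_linear.has_vector_derivative[OF bounded_linear_scaleR_left has_vector_derivative_id]
    by simp
  have c: "((\<lambda>u. y *\<^sub>R ey) has_vector_derivative 0) (at u)"
    by simp
  have "((\<lambda>u. chart u y) has_vector_derivative chart_du u y) (at u)"
    unfolding chart_def chart_du_def using has_vector_derivative_add[OF has_vector_derivative_add[OF a b] c] by simp
  then show ?thesis by (simp add: has_vector_derivative_def)
qed

lemma chart_has_derivative_y: assumes "u^2 + y^2 < 1"
  shows "((\<lambda>y. chart u y) has_derivative (\<lambda>s. s *\<^sub>R chart_dy u y)) (at y)"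
proof -
  have pos: "1 - u^2 - y^2 > 0" using assms by simp
  have "((\<lambda>y. 1 - u^2 - y^2) has_real_derivative (-2*y)) (at y)"
    by (auto intro!: derivative_eq_intros)
  from DERIV_chain2[OF DERIV_real_sqrt[OF pos] this]
  have "((\<lambda>y. chart_weight u y) has_real_derivative (-(y / chart_weight u y))) (at y)"
    unfolding chart_weight_def by (simp add: field_simps)
  then have a: "((\<lambda>y. chart_weight u y *\<^sub>R p) has_vector_derivative (-(y / chart_weight u y)) *\<^sub>R p) (at y)"
    unfolding has_real_derivative_iff_has_vector_derivative
    by (rule bounded_linear.has_vector_derivative[OF bounded_linear_scaleR_left])
  have b: "((\<lambda>y. y *\<^sub>R ey) has_vector_derivative ey) (at y)"
    using bounded_linear.has_vector_derivative[OF bounded_linear_scaleR_left has_vector_derivative_id]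
    by simp
  have c: "((\<lambda>y. u *\<^sub>R E) has_vector_derivative 0) (at y)"
    by simp
  have "((\<lambda>y. chart u y) has_vector_derivative chart_dy u y) (at y)"
    unfolding chart_def chart_dy_def using has_vector_derivative_add[OF has_vector_derivative_add[OF a c] b] by simp
  then show ?thesis by (simp add: has_vector_derivative_def)
qed


lemma chart_chain_u:
  fixes f :: "real^3 \<Rightarrow> real"
  assumes "\<And>q. (f has_derivative Df q) (at q)" "u^2 + y^2 < 1"
  shows "((\<lambda>u. f (chart u y)) has_real_derivative Df (chart u y) (chart_du u y)) (at u)"
  by (rule has_real_derivative_along_curve[OF chart_has_derivative_u[OF assms(2)] assms(1)])

lemma chart_chain_y:
  fixes f :: "real^3 \<Rightarrow> real"
  assumes "\<And>q. (f has_derivative Df q) (at q)" "u^2 + y^2 < 1"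
  shows "((\<lambda>y. f (chart u y)) has_real_derivative Df (chart u y) (chart_dy u y)) (at y)"
  by (rule has_real_derivative_along_curve[OF chart_has_derivative_y[OF assms(2)] assms(1)])

lemma chart_continuous: "continuous_on {(u,y). u^2 + y^2 < 1} (\<lambda>z. chart (fst z) (snd z))"
  unfolding chart_def chart_weight_def by (intro continuous_intros)

lemma chart_origin: "chart 0 0 = p" by (simp add: chart_def chart_weight_def)

end

definition frame_rho :: "real^3 \<Rightarrow> real" where
  "frame_rho q = sqrt (q$1^2 + q$3^2)"
definition frame_E :: "real^3 \<Rightarrow> real^3" where
  "frame_E q = vector [-q$3, 0, q$1]"
definition frame1 :: "real^3 \<Rightarrow> real^3" where
  "frame1 q = (1 / frame_rho q) *\<^sub>R frame_E q"
definition frame2 :: "real^3 \<Rightarrow> real^3" where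
  "frame2 q = (1 / frame_rho q) *\<^sub>R (vector [0,1,0] - q$2 *\<^sub>R q)"

lemma tangent_frame:
  assumes q: "q \<in> sphere2" and r: "frame_rho q > 0"
  shows "norm (frame1 q) = 1" "norm (frame2 q) = 1" "frame1 q \<bullet> frame2 q = 0"
    "frame1 q \<bullet> q = 0" "frame2 q \<bullet> q = 0" "frame1 q $ 2 = 0" "frame2 q $ 2 = frame_rho q"
proof -
  have qq: "q$1^2 + q$2^2 + q$3^2 = 1"
    using q unfolding sphere2_def by (simp add: norm_eq_sqrt_inner inner3 power2_eq_square)
  have rr: "frame_rho q * frame_rho q = q$1^2 + q$3^2"
    unfolding frame_rho_def by (simp flip: power2_eq_square)
  show "norm (frame1 q) = 1"
  proof -
    have "norm (frame_E q) = frame_rho q" by (simp add: norm3 frame_E_def frame_rho_def add.commute)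
    then show ?thesis using r by (simp add: frame1_def)
  qed
  show "norm (frame2 q) = 1"
  proof -
    have "norm ((vector [0,1,0] :: real^3) - q$2 *\<^sub>R q)
        = sqrt ((q$2*q$1)^2 + (1 - q$2*q$2)^2 + (q$2*q$3)^2)"
      by (simp add: norm3)
    also have "(q$2*q$1)^2 + (1 - q$2*q$2)^2 + (q$2*q$3)^2 = q$1^2 + q$3^2"
      using qq by algebra
    moreover have "\<not> (q$1 = 0 \<and> q$3 = 0)" using r by (auto simp: frame_rho_def)
    ultimately show ?thesis using r by (simp add: frame2_def frame_rho_def)
  qed
  show "frame1 q \<bullet> frame2 q = 0" "frame1 q \<bullet> q = 0"
    by (simp_all add: frame1_def frame2_def frame_E_def inner3 algebra_simps)
  have "(vector [0,1,0] - q$2 *\<^sub>R q) \<bullet> q = q$2 * (1 - (q$1^2 + q$2^2 + q$3^2))"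
    by (simp add: inner3 algebra_simps power2_eq_square)
  then show "frame2 q \<bullet> q = 0" using qq by (simp add: frame2_def)
  show "frame1 q $ 2 = 0" by (simp add: frame1_def frame_E_def)
  have "frame2 q $ 2 = (1 - q$2*q$2) / frame_rho q" by (simp add: frame2_def)
  also have "\<dots> = frame_rho q * frame_rho q / frame_rho q"
    using qq rr by (simp add: power2_eq_square algebra_simps)
  finally show "frame2 q $ 2 = frame_rho q" using r by simp
qed

lemma tangent_frame_coordinates:
  assumes "frame_rho q > 0" "q \<bullet> w = 0"
  shows "frame_rho q * (frame1 q \<bullet> w) = frame_E q \<bullet> w" "frame_rho q * (frame2 q \<bullet> w) = w$2"
proof -
  show "frame_rho q * (frame1 q \<bullet> w) = frame_E q \<bullet> w" using assms(1) by (simp add: frame1_def)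
  have "frame_rho q * (frame2 q \<bullet> w) = (vector [0,1,0] - q$2 *\<^sub>R q) \<bullet> w"
    using assms(1) by (simp add: frame2_def)
  also have "\<dots> = w$2 - q$2 * (q \<bullet> w)" by (simp add: inner_diff_left inner3 algebra_simps)
  finally show "frame_rho q * (frame2 q \<bullet> w) = w$2" using assms(2) by simp
qed

lemma frame_continuous:
  assumes "continuous (at x) f" "frame_rho (f x) \<noteq> 0"
  shows "continuous (at x) (\<lambda>x. frame1 (f x))" "continuous (at x) (\<lambda>x. frame2 (f x))"
    "continuous (at x) (\<lambda>x. frame_E (f x))"
proof -
  have "continuous (at x) (\<lambda>x. frame_rho (f x))"
    unfolding frame_rho_def using assms(1) by (intro continuous_intros)
  then show "continuous (at x) (\<lambda>x. frame1 (f x))" "continuous (at x) (\<lambda>x. frame2 (f x))"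
    "continuous (at x) (\<lambda>x. frame_E (f x))"
    unfolding frame1_def frame2_def frame_E_def divide_inverse using assms
    by (auto intro!: continuous_intros)
qed

text \<open>The linearization of the regularization has determinant A K + R and trace m11 + A w + m22,
  where A = phi'/eps is large, K is close to d /= 0, |w| is bounded below and R, m11, m22 are
  bounded.\<close>

lemma large_multiple_dominates:
  fixes A K d R Mb :: real
  assumes R: "\<bar>R\<bar> \<le> 2*Mb^2" and K: "\<bar>K - d\<bar> \<le> \<bar>d\<bar>/2" and d: "d \<noteq> 0"
    and A: "A \<ge> 4*Mb^2/\<bar>d\<bar> + 1"
  shows "A*K + R \<noteq> 0" "A*K + R \<le> A*(3*\<bar>d\<bar>/2) + 2*Mb^2"
proof -
  have dpos: "\<bar>d\<bar> > 0" using d by simp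
  have Apos: "A > 0" using A dpos by (smt (verit) divide_nonneg_pos zero_le_power2)
  have K1: "\<bar>K\<bar> \<ge> \<bar>d\<bar>/2" "\<bar>K\<bar> \<le> 3*\<bar>d\<bar>/2" using K by linarith+
  have "A*\<bar>d\<bar> \<ge> (4*Mb^2/\<bar>d\<bar> + 1)*\<bar>d\<bar>"
    using A dpos by (simp add: mult_right_mono)
  moreover have "(4*Mb^2/\<bar>d\<bar> + 1)*\<bar>d\<bar> = 4*Mb^2 + \<bar>d\<bar>" using dpos by (simp add: distrib_right)
  moreover have "A*\<bar>K\<bar> \<ge> A*(\<bar>d\<bar>/2)" using K1(1) Apos by (simp add: mult_left_mono)
  ultimately have AK: "A*\<bar>K\<bar> > 2*Mb^2" using dpos by simp
  have absAK: "\<bar>A*K\<bar> = A*\<bar>K\<bar>" using Apos by (simp add: abs_mult)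
  then show "A*K + R \<noteq> 0" using AK R by linarith
  have "A*\<bar>K\<bar> \<le> A*(3*\<bar>d\<bar>/2)" using K1(2) Apos by (simp add: mult_left_mono)
  then show "A*K + R \<le> A*(3*\<bar>d\<bar>/2) + 2*Mb^2"
    using R absAK by (smt (verit) abs_ge_self)
qed

lemma large_trace_square:
  fixes A m11 m22 w d Mb cw :: real
  assumes m: "\<bar>m11\<bar> \<le> Mb" "\<bar>m22\<bar> \<le> Mb" and w: "\<bar>w\<bar> \<ge> cw" "cw > 0"
    and A: "A \<ge> 8*Mb/cw" "A \<ge> 48*\<bar>d\<bar>/cw^2"
  shows "(m11 + A*w + m22)^2 \<ge> 4*(A*(3*\<bar>d\<bar>/2) + 2*Mb^2)"
proof -
  have Mb0: "Mb \<ge> 0" using m(1) by linarith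
  have Apos: "A \<ge> 0" using A(1) Mb0 w(2) by (smt (verit) divide_nonneg_pos)
  have Acw: "A*cw \<ge> 8*Mb" using A(1) w(2) by (simp add: field_simps)
  have "A*\<bar>w\<bar> \<ge> A*cw" using w Apos by (simp add: mult_left_mono)
  moreover have "\<bar>A*w\<bar> = A*\<bar>w\<bar>" using Apos by (simp add: abs_mult)
  ultimately have trlow: "\<bar>m11 + A*w + m22\<bar> \<ge> A*cw/2" using Acw m by linarith
  have sq: "(m11 + A*w + m22)^2 \<ge> (A*cw/2)^2"
    using power_mono[OF trlow, of 2] Apos w(2) by simp
  have "A*cw^2 \<ge> 48*\<bar>d\<bar>" using A(2) w(2) by (simp add: field_simps)
  then have "A*(A*cw^2) \<ge> A*(48*\<bar>d\<bar>)" using Apos by (simp add: mult_left_mono)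
  moreover have "(A*cw/2)^2 = A*(A*cw^2)/4" by (simp add: power2_eq_square)
  ultimately have c1: "(A*cw/2)^2 \<ge> 12*A*\<bar>d\<bar>" by simp
  have "(8*Mb)^2 \<le> (A*cw)^2" using power_mono[OF Acw, of 2] Mb0 by simp
  then have c2: "(A*cw/2)^2 \<ge> 16*Mb^2" by (simp add: power_mult_distrib power_divide)
  show ?thesis using sq c1 c2 by (simp add: algebra_simps)
qed

lemma saddle_or_node_arith:
  fixes A m11 m12 m21 m22 K w d Mb cw :: real
  assumes m: "\<bar>m11\<bar> \<le> Mb" "\<bar>m12\<bar> \<le> Mb" "\<bar>m21\<bar> \<le> Mb" "\<bar>m22\<bar> \<le> Mb"
    and K: "\<bar>K - d\<bar> \<le> \<bar>d\<bar>/2" and d: "d \<noteq> 0" and w: "\<bar>w\<bar> \<ge> cw" "cw > 0"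
    and A: "A \<ge> 8*Mb/cw + 48*\<bar>d\<bar>/cw^2 + 4*Mb^2/\<bar>d\<bar> + 1"
  shows "A*K + (m11*m22 - m12*m21) < 0 \<or>
         (A*K + (m11*m22 - m12*m21) > 0 \<and> (m11 + A*w + m22)^2 \<ge> 4*(A*K + (m11*m22 - m12*m21)))"
proof -
  have Mb0: "Mb \<ge> 0" using m(1) by linarith
  have "8*Mb/cw \<ge> 0" "48*\<bar>d\<bar>/cw^2 \<ge> 0" "4*Mb^2/\<bar>d\<bar> \<ge> 0"
    using Mb0 w(2) d by simp_all
  then have A1: "A \<ge> 8*Mb/cw" "A \<ge> 48*\<bar>d\<bar>/cw^2" "A \<ge> 4*Mb^2/\<bar>d\<bar> + 1"
    using A by linarith+
  have "\<bar>m11*m22\<bar> \<le> Mb*Mb" "\<bar>m12*m21\<bar> \<le> Mb*Mb"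
    using m by (simp_all add: abs_mult mult_mono')
  then have R: "\<bar>m11*m22 - m12*m21\<bar> \<le> 2*Mb^2" by (simp add: power2_eq_square)
  note det = large_multiple_dominates[OF R K d A1(3)]
  have "4*(A*K + (m11*m22 - m12*m21)) \<le> 4*(A*(3*\<bar>d\<bar>/2) + 2*Mb^2)"
    using det(2) by simp
  then have "(m11 + A*w + m22)^2 \<ge> 4*(A*K + (m11*m22 - m12*m21))"
    using large_trace_square[OF m(1,4) w A1(1,2)] by (rule order_trans)
  then show ?thesis using det(1) by linarith
qed

context tangent_fields
begin

definition "reg \<phi> \<epsilon> x = (1 - \<phi> (x$2/\<epsilon>)) *\<^sub>R V x + \<phi> (x$2/\<epsilon>) *\<^sub>R U x"
definition "Mix q t h = t *\<^sub>R DU q h + (1 - t) *\<^sub>R DV q h"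

text \<open>The coefficient of phi'/eps in the determinant of the linearization.\<close>
definition "Kcoef q t = (frame1 q \<bullet> Mix q t (frame1 q)) * (U q $2 - V q $2)
  - (frame_E q \<bullet> (U q - V q)) * (frame2 q \<bullet> Mix q t (frame1 q))"

lemma reg_has_derivative:
  assumes "(\<phi> has_real_derivative \<phi>') (at (q$2/\<epsilon>))" "\<epsilon> \<noteq> 0"
  shows "(reg \<phi> \<epsilon> has_derivative
     (\<lambda>h. (\<phi>'/\<epsilon> * h$2) *\<^sub>R (U q - V q) + Mix q (\<phi> (q$2/\<epsilon>)) h)) (at q)"
proof -
  have i: "((\<lambda>x::real^3. x$2/\<epsilon>) has_derivative (\<lambda>h. h$2/\<epsilon>)) (at q)"
    by (intro derivative_eq_intros idn_deriv) (use assms(2) in auto)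
  have f: "((\<lambda>x. \<phi> (x$2/\<epsilon>)) has_derivative (\<lambda>h. \<phi>' * (h$2/\<epsilon>))) (at q)"
    using has_derivative_compose[OF i assms(1)[unfolded has_field_derivative_def]]
    by (simp add: mult.commute)
  show ?thesis
    unfolding Mix_def reg_def[abs_def]
    by (rule has_derivative_eq_rhs,
        rule has_derivative_add[OF has_derivative_scaleR[OF has_derivative_diff[OF has_derivative_const f] dV]
          has_derivative_scaleR[OF f dU]])
      (simp add: algebra_simps)
qed

lemma reg_linearization:
  assumes q: "q \<in> sphere2" and r: "frame_rho q > 0"
    and dphi: "(\<phi> has_real_derivative \<phi>') (at (q$2/\<epsilon>))" and eps: "\<epsilon> \<noteq> 0"
  defines "t \<equiv> \<phi> (q$2/\<epsilon>)" and "A \<equiv> \<phi>'/\<epsilon>"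
  shows "tangent_linearization (reg \<phi> \<epsilon>) q (frame1 q) (frame2 q)
     ((frame1 q \<bullet> Mix q t (frame1 q)) + A * (U q $2 - V q $2) + (frame2 q \<bullet> Mix q t (frame2 q)),
      A * Kcoef q t + ((frame1 q \<bullet> Mix q t (frame1 q)) * (frame2 q \<bullet> Mix q t (frame2 q))
        - (frame1 q \<bullet> Mix q t (frame2 q)) * (frame2 q \<bullet> Mix q t (frame1 q))))"
proof -
  let ?L = "\<lambda>h. (\<phi>'/\<epsilon> * h$2) *\<^sub>R (U q - V q) + Mix q t h"
  define w where "w = U q - V q"
  have wq: "q \<bullet> w = 0" using tU[OF q] tV[OF q] unfolding w_def by (simp add: inner_diff_right)
  note F = tangent_frame[OF q r] and C = tangent_frame_coordinates[OF r wq]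
  have L1: "frame1 q \<bullet> ?L (frame1 q) = frame1 q \<bullet> Mix q t (frame1 q)"
    "frame2 q \<bullet> ?L (frame1 q) = frame2 q \<bullet> Mix q t (frame1 q)"
    by (simp_all add: F(6) inner_add_right)
  have L2: "frame1 q \<bullet> ?L (frame2 q) = A * (frame_E q \<bullet> w) + frame1 q \<bullet> Mix q t (frame2 q)"
    "frame2 q \<bullet> ?L (frame2 q) = A * w$2 + frame2 q \<bullet> Mix q t (frame2 q)"
    unfolding inner_add_right inner_scaleR_right F(7) w_def[symmetric] A_def
    using C by (simp_all add: algebra_simps)
  have der: "(reg \<phi> \<epsilon> has_derivative ?L) (at q)"
    using reg_has_derivative[OF dphi eps] unfolding t_def .
  have eq: "(frame1 q \<bullet> ?L (frame1 q) + frame2 q \<bullet> ?L (frame2 q),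
      (frame1 q \<bullet> ?L (frame1 q)) * (frame2 q \<bullet> ?L (frame2 q))
        - (frame1 q \<bullet> ?L (frame2 q)) * (frame2 q \<bullet> ?L (frame1 q))) =
    ((frame1 q \<bullet> Mix q t (frame1 q)) + A * (U q $2 - V q $2) + (frame2 q \<bullet> Mix q t (frame2 q)),
      A * Kcoef q t + ((frame1 q \<bullet> Mix q t (frame1 q)) * (frame2 q \<bullet> Mix q t (frame2 q))
        - (frame1 q \<bullet> Mix q t (frame2 q)) * (frame2 q \<bullet> Mix q t (frame1 q))))"
    unfolding L1 L2 Kcoef_def w_def by (simp add: algebra_simps)
  show ?thesis
    unfolding tangent_linearization_def
    by (intro exI[of _ ?L] conjI der F(1-5) eq[symmetric])
qed

end

section \<open>Regularization near a hyperbolic singular point of the Filippov field\<close>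

locale hyperbolic_sliding_point = chart_at +
  fixes \<phi> :: "real \<Rightarrow> real" and d :: real
  assumes tf: "transition_function \<phi>"
    and sg: "U p $2 * V p $2 < 0"
    and Dp: "Det p = 0"
    and dd: "dDet p E = d" and dnz: "d \<noteq> 0"
    and p3: "p$3 \<ge> 0"
begin

abbreviation "Wreg \<epsilon> \<equiv> reg \<phi> \<epsilon>"

abbreviation "m11 q t \<equiv> frame1 q \<bullet> Mix q t (frame1 q)"
abbreviation "m12 q t \<equiv> frame1 q \<bullet> Mix q t (frame2 q)"
abbreviation "m21 q t \<equiv> frame2 q \<bullet> Mix q t (frame1 q)"
abbreviation "m22 q t \<equiv> frame2 q \<bullet> Mix q t (frame2 q)"

text \<open>t* is the convex weight with t* U p + (1 - t*) V p = 0.\<close>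
definition "tstar = V p $2 / (V p $2 - U p $2)"

lemma pS: "p \<in> sphere2" using pp by (simp add: sphere2_def norm_eq_sqrt_inner)

lemma tstar_range: "0 < tstar" "tstar < 1"
  using sg unfolding tstar_def
  by (auto simp: zero_less_mult_iff mult_less_0_iff divide_pos_pos divide_less_eq divide_neg_neg)

lemma tstar_balance: "tstar *\<^sub>R U p + (1 - tstar) *\<^sub>R V p = 0"
proof (rule horizontal_parallel_tangent_zero)
  show "p \<bullet> p = 1" by (rule pp)
  show "0 < p$1^2 + p$3^2" using p13 by simp
  show "(tstar *\<^sub>R U p + (1 - tstar) *\<^sub>R V p) \<bullet> p = 0"
    using tU[OF pS] tV[OF pS] by (simp add: inner_commute[of _ p] inner_add_right)
  show "V p \<bullet> p = 0" using tV[OF pS] by (simp add: inner_commute)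
  have "V p $2 - U p $2 \<noteq> 0" using sg by auto
  then show "(tstar *\<^sub>R U p + (1 - tstar) *\<^sub>R V p) $ 2 = 0"
    unfolding tstar_def by (simp add: field_simps)
  show "V p $ 2 \<noteq> 0" using sg by auto
  show "triple (tstar *\<^sub>R U p + (1 - tstar) *\<^sub>R V p) (V p) p = 0"
    using Dp by (simp add: triple_linear_left triple_repeated Det_def)
qed

lemma d_formula: "d = triple (U p - V p) (Mix p tstar E) p"
proof -
  have "d = triple (DU p E) (V p) p + triple (U p) (DV p E) p + triple (U p) (V p) E"
    using dd by (simp add: dDet_def)
  also have "\<dots> = triple (U p - V p) (tstar *\<^sub>R DU p E + (1-tstar) *\<^sub>R DV p E) p"
    by (rule triple_derivative_at_balance[OF tstar_balance]) (use tstar_range in simp)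
  finally show ?thesis by (simp add: Mix_def)
qed

lemma frame_rho_p: "frame_rho p = 1" using p13 by (simp add: frame_rho_def)
lemma frame_E_p: "frame_E p = E" by (simp add: frame_E_def E_def)
lemma frame1_p: "frame1 p = E" by (simp add: frame1_def frame_rho_p frame_E_p)
lemma frame2_p: "frame2 p = vector [0,1,0]" by (simp add: frame2_def frame_rho_p p2)

lemma Kcoef_p: "Kcoef p tstar = d"
proof -
  have "Kcoef p tstar = (E \<bullet> Mix p tstar E) * (U p - V p)$2 - (E \<bullet> (U p - V p)) * (Mix p tstar E)$2"
    by (simp add: Kcoef_def frame1_p frame2_p frame_E_p inner3)
  also have "\<dots> = triple (U p - V p) (Mix p tstar E) p"
    using triple_equatorial[OF p2, of "U p - V p" "Mix p tstar E"] by (simp add: E_def)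
  finally show ?thesis using d_formula by simp
qed


lemma frame_entry_continuous:
  assumes "a \<in> {frame1, frame2}" "b \<in> {frame1, frame2}"
  shows "continuous (at (p, tstar)) (\<lambda>z. a (fst z) \<bullet> Mix (fst z) (snd z) (b (fst z)))"
proof -
  have f: "continuous (at (p,tstar)) (\<lambda>z::(real^3)\<times>real. fst z)" by (intro continuous_intros)
  have r: "frame_rho (fst (p,tstar)) \<noteq> 0" using frame_rho_p by simp
  have "continuous (at (p,tstar)) (\<lambda>z::(real^3)\<times>real. a (fst z))"
    "continuous (at (p,tstar)) (\<lambda>z::(real^3)\<times>real. b (fst z))"
    using assms frame_continuous[OF f r] by auto
  then show ?thesis unfolding Mix_def by (intro continuous_intros DU_at DV_at f)
qed

lemma Kcoef_continuous: "continuous (at (p, tstar)) (\<lambda>z. Kcoef (fst z) (snd z))"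
proof -
  have f: "continuous (at (p,tstar)) (\<lambda>z::(real^3)\<times>real. fst z)" by (intro continuous_intros)
  have r: "frame_rho (fst (p,tstar)) \<noteq> 0" using frame_rho_p by simp
  show ?thesis unfolding Kcoef_def Mix_def
    by (intro continuous_intros DU_at DV_at frame_continuous[OF f r] f U_at V_at)
qed

lemma frame_entries_bounded:
  "\<exists>rK Mb. rK > 0 \<and> Mb \<ge> 0 \<and> (\<forall>q t. norm (q - p) < rK \<longrightarrow> \<bar>t - tstar\<bar> < rK \<longrightarrow>
      \<bar>m11 q t\<bar> \<le> Mb \<and> \<bar>m12 q t\<bar> \<le> Mb \<and> \<bar>m21 q t\<bar> \<le> Mb \<and> \<bar>m22 q t\<bar> \<le> Mb \<and>
      \<bar>Kcoef q t - d\<bar> \<le> \<bar>d\<bar>/2)"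
proof -
  have d2: "\<bar>d\<bar>/2 > 0" using dnz by simp
  have "\<forall>\<^sub>F z in nhds (p, tstar). \<bar>m11 (fst z) (snd z) - m11 p tstar\<bar> < 1 \<and>
      \<bar>m12 (fst z) (snd z) - m12 p tstar\<bar> < 1 \<and> \<bar>m21 (fst z) (snd z) - m21 p tstar\<bar> < 1 \<and>
      \<bar>m22 (fst z) (snd z) - m22 p tstar\<bar> < 1 \<and> \<bar>Kcoef (fst z) (snd z) - Kcoef p tstar\<bar> < \<bar>d\<bar>/2"
    using continuous_at_eventually_close[OF frame_entry_continuous[of frame1 frame1], of 1]
      continuous_at_eventually_close[OF frame_entry_continuous[of frame1 frame2], of 1]
      continuous_at_eventually_close[OF frame_entry_continuous[of frame2 frame1], of 1]
      continuous_at_eventually_close[OF frame_entry_continuous[of frame2 frame2], of 1]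
      continuous_at_eventually_close[OF Kcoef_continuous d2]
    by (simp add: eventually_conj_iff)
  then obtain rK where rK: "rK > 0" "\<forall>q t. norm (q - p) < rK \<longrightarrow> norm (t - tstar) < rK \<longrightarrow>
      \<bar>m11 q t - m11 p tstar\<bar> < 1 \<and> \<bar>m12 q t - m12 p tstar\<bar> < 1 \<and> \<bar>m21 q t - m21 p tstar\<bar> < 1 \<and>
      \<bar>m22 q t - m22 p tstar\<bar> < 1 \<and> \<bar>Kcoef q t - Kcoef p tstar\<bar> < \<bar>d\<bar>/2"
    by (auto dest!: eventually_nhds_pair_radius)
  define Mb where "Mb = \<bar>m11 p tstar\<bar> + \<bar>m12 p tstar\<bar> + \<bar>m21 p tstar\<bar> + \<bar>m22 p tstar\<bar> + 1"
  have "\<bar>m11 q t\<bar> \<le> Mb \<and> \<bar>m12 q t\<bar> \<le> Mb \<and> \<bar>m21 q t\<bar> \<le> Mb \<and> \<bar>m22 q t\<bar> \<le> Mb \<and>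
      \<bar>Kcoef q t - d\<bar> \<le> \<bar>d\<bar>/2" if "norm (q - p) < rK" "\<bar>t - tstar\<bar> < rK" for q t
    using rK(2) that Kcoef_p unfolding Mb_def by (smt (verit) real_norm_def)
  moreover have "Mb \<ge> 0" unfolding Mb_def by simp
  ultimately show ?thesis using rK(1) by blast
qed

lemma ratio_continuous: "continuous (at p) (\<lambda>q. V q $2 / (V q $2 - U q $2))"
proof -
  have "V p $2 - U p $2 \<noteq> 0" using sg by auto
  then show ?thesis by (intro continuous_intros U_at V_at) auto
qed

lemma U2_continuous: "continuous (at p) (\<lambda>q. U q $2)" by (intro continuous_intros U_at)
lemma V2_continuous: "continuous (at p) (\<lambda>q. V q $2)" by (intro continuous_intros V_at)

lemma saddle_or_node_at:
  assumes q: "q \<in> sphere2" "frame_rho q > 0" "Wreg \<epsilon> q = 0" and eps: "\<epsilon> > 0"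
    and H: "\<bar>m11 q t\<bar> \<le> Mb" "\<bar>m12 q t\<bar> \<le> Mb" "\<bar>m21 q t\<bar> \<le> Mb" "\<bar>m22 q t\<bar> \<le> Mb"
      "\<bar>Kcoef q t - d\<bar> \<le> \<bar>d\<bar>/2"
    and t: "t = \<phi> (q$2/\<epsilon>)"
    and w: "\<bar>U q $2 - V q $2\<bar> \<ge> cw" "cw > 0"
    and A: "deriv \<phi> (q$2/\<epsilon>) / \<epsilon> \<ge> 8*Mb/cw + 48*\<bar>d\<bar>/cw^2 + 4*Mb^2/\<bar>d\<bar> + 1"
  shows "hyperbolic_saddle (Wreg \<epsilon>) q \<or> hyperbolic_node (Wreg \<epsilon>) q"
proof -
  have TL: "tangent_linearization (Wreg \<epsilon>) q (frame1 q) (frame2 q)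
     (m11 q t + deriv \<phi> (q$2/\<epsilon>) / \<epsilon> * (U q $2 - V q $2) + m22 q t,
      deriv \<phi> (q$2/\<epsilon>) / \<epsilon> * Kcoef q t + (m11 q t * m22 q t - m12 q t * m21 q t))"
    unfolding t using reg_linearization[OF q(1,2) transition_has_derivative[OF tf]] eps by simp
  have sp: "sing_point_S2 (Wreg \<epsilon>) q" using q by (simp add: sing_point_S2_def)
  show ?thesis
    using saddle_or_node_arith[OF H(1-4) H(5) dnz w A] sp TL
    unfolding hyperbolic_saddle_def hyperbolic_node_def by blast
qed

end

lemma perturbed_opposite_signs:
  fixes s v x z :: real
  assumes "s * v < 0" "\<bar>x - s\<bar> < \<bar>s\<bar>/2" "\<bar>z - v\<bar> < \<bar>v\<bar>/2"
  shows "x * z < 0" "\<bar>x - z\<bar> \<ge> (\<bar>s\<bar> + \<bar>v\<bar>)/2" "s > 0 \<longrightarrow> x > 0" "s < 0 \<longrightarrow> x < 0"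
    "v > 0 \<longrightarrow> z > 0" "v < 0 \<longrightarrow> z < 0"
proof -
  have c: "(s > 0 \<and> v < 0) \<or> (s < 0 \<and> v > 0)" using assms(1) by (auto simp: mult_less_0_iff)
  have a1: "-\<bar>x - s\<bar> \<le> x - s" "x - s \<le> \<bar>x - s\<bar>" "-\<bar>z - v\<bar> \<le> z - v" "z - v \<le> \<bar>z - v\<bar>" by simp_all
  show i1: "s > 0 \<longrightarrow> x > 0" "s < 0 \<longrightarrow> x < 0" using assms(2) a1 by auto
  show i2: "v > 0 \<longrightarrow> z > 0" "v < 0 \<longrightarrow> z < 0" using assms(3) a1 by auto
  show "x * z < 0" using c i1 i2 by (auto simp: mult_less_0_iff)
  have a2: "x - z \<le> \<bar>x - z\<bar>" "z - x \<le> \<bar>x - z\<bar>" by simp_all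
  show "\<bar>x - z\<bar> \<ge> (\<bar>s\<bar> + \<bar>v\<bar>)/2" using c assms(2,3) a1 a2 by auto
qed

text \<open>The arithmetic core of uniqueness: with P \<ge> c gap/e the dominant term P Wp of the
  difference of two zero equations cannot be cancelled by the Lipschitz terms when e is small.\<close>
lemma no_second_zero_arith:
  fixes gap P c e cw Wp W F Vp Vv L1 L2 :: real
  assumes "gap > 0" "P \<ge> c * gap / e" "c > 0" "e > 0" "\<bar>Wp\<bar> \<ge> cw" "cw > 0"
    "P * Wp + F * (Wp - W) + (Vp - Vv) = 0" "0 \<le> F" "F \<le> 1"
    "\<bar>Wp - W\<bar> \<le> L1 * gap" "\<bar>Vp - Vv\<bar> \<le> L2 * gap" "L1 \<ge> 0" "L2 \<ge> 0"
    "e \<le> c * cw / (2 * (L1 + L2 + 1))"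
  shows False
proof -
  have P0: "P > 0" using assms(1-4) by (smt (verit) divide_pos_pos mult_pos_pos)
  have "\<bar>P * Wp\<bar> = P * \<bar>Wp\<bar>" using P0 by (simp add: abs_mult)
  also have "\<dots> \<ge> (c * gap / e) * cw" using assms(2,5,6) P0 by (meson mult_mono less_imp_le order_trans divide_nonneg_pos mult_nonneg_nonneg assms(1,3,4))
  finally have l: "\<bar>P * Wp\<bar> \<ge> c * gap / e * cw" .
  have "\<bar>F * (Wp - W)\<bar> \<le> \<bar>Wp - W\<bar>" using assms(8,9) by (simp add: abs_mult mult_left_le_one_le)
  then have "\<bar>F * (Wp - W) + (Vp - Vv)\<bar> \<le> L1 * gap + L2 * gap" using assms(10,11) by linarith
  moreover have "\<bar>P * Wp\<bar> = \<bar>F * (Wp - W) + (Vp - Vv)\<bar>" using assms(7) by (simp add: abs_minus_commute eq_neg_iff_add_eq_0[symmetric] abs_minus_cancel)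
  ultimately have u: "c * gap / e * cw \<le> (L1 + L2) * gap" using l by (simp add: algebra_simps)
  have "2 * (L1 + L2 + 1) * e \<le> c * cw" using assms(14) assms(12,13) by (simp add: le_divide_eq mult.commute)
  then have "2 * (L1 + L2 + 1) * e * gap \<le> c * cw * gap" using assms(1) by (simp add: mult_right_mono)
  moreover have "c * gap / e * cw * e = c * cw * gap" using assms(4) by simp
  moreover have "(L1 + L2) * gap * e < 2 * (L1 + L2 + 1) * e * gap"
  proof -
    have "(L1 + L2 + 2) * (e * gap) > 0" using assms(1,4,12,13) by (intro mult_pos_pos) auto
    moreover have "2 * (L1 + L2 + 1) * e * gap = (L1 + L2) * gap * e + (L1 + L2 + 2) * (e * gap)"
      by (simp add: algebra_simps)
    ultimately show ?thesis by linarith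
  qed
  moreover have "c * gap / e * cw * e \<le> (L1 + L2) * gap * e" by (rule mult_right_mono[OF u]) (use assms(4) in simp)
  ultimately show False by linarith
qed

text \<open>The box |u| \<le> a, |y| \<le> b lies in that ball, in
  the upper hemisphere, and is flat enough (b(Cy+1) \<le> a/2) for the graph construction.\<close>
locale regularization_box = hyperbolic_sliding_point +
  fixes rK Mb r a b Cy BU BV cw \<delta>t c\<phi> :: real
  assumes entries_bound: "rK > 0" "Mb \<ge> 0" "\<forall>q t. norm (q - p) < rK \<longrightarrow> \<bar>t - tstar\<bar> < rK \<longrightarrow>
      \<bar>m11 q t\<bar> \<le> Mb \<and> \<bar>m12 q t\<bar> \<le> Mb \<and> \<bar>m21 q t\<bar> \<le> Mb \<and> \<bar>m22 q t\<bar> \<le> Mb \<and>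
      \<bar>Kcoef q t - d\<bar> \<le> \<bar>d\<bar>/2"
    and delta_t: "0 < \<delta>t" "\<delta>t \<le> rK/2" "0 < tstar - \<delta>t" "tstar + \<delta>t < 1"
    and slope_bound: "c\<phi> > 0" "\<forall>s. tstar - \<delta>t \<le> \<phi> s \<and> \<phi> s \<le> tstar + \<delta>t \<longrightarrow> c\<phi> \<le> deriv \<phi> s"
    and r: "0 < r" "r \<le> rK"
    and dDet_E: "\<forall>q h. norm (q - p) < r \<longrightarrow> norm (h - E) < r \<longrightarrow> \<bar>dDet q h - d\<bar> < \<bar>d\<bar>/4"
    and dDet_ey: "\<forall>q h. norm (q - p) < r \<longrightarrow> norm (h - ey) < r \<longrightarrow> \<bar>dDet q h\<bar> \<le> Cy * \<bar>d\<bar>"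
    and Cy: "Cy \<ge> 0"
    and DU_y_bound: "\<forall>q h. norm (q - p) < r \<longrightarrow> (norm (h - E) < r \<or> norm (h - ey) < r) \<longrightarrow> \<bar>DU q h $2\<bar> \<le> BU"
    and DV_y_bound: "\<forall>q h. norm (q - p) < r \<longrightarrow> (norm (h - E) < r \<or> norm (h - ey) < r) \<longrightarrow> \<bar>DV q h $2\<bar> \<le> BV"
    and signs_near: "\<forall>q. norm (q - p) < r \<longrightarrow> \<bar>U q $2 - U p $2\<bar> < \<bar>U p $2\<bar>/2 \<and> \<bar>V q $2 - V p $2\<bar> < \<bar>V p $2\<bar>/2"
    and ratio_near: "\<forall>q. norm (q - p) < r \<longrightarrow> \<bar>V q $2 / (V q $2 - U q $2) - tstar\<bar> < \<delta>t"
    and cw: "cw = (\<bar>U p $2\<bar> + \<bar>V p $2\<bar>)/2"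
    and a: "0 < a" "a \<le> r/8" "a \<le> 1/4" "p$3 > 0 \<longrightarrow> a \<le> p$3/4"
    and b: "0 < b" "b \<le> r/8" "b \<le> 1/4" "b * (Cy + 1) \<le> a/2"
begin

lemma sq_small: "\<bar>x\<bar> \<le> 1/4 \<Longrightarrow> x^2 \<le> (1/16::real)"
proof -
  assume "\<bar>x\<bar> \<le> 1/4"
  from power_mono[OF this abs_ge_zero, of 2] show ?thesis by (simp add: power_divide)
qed

lemma box_bounds:
  assumes "\<bar>u\<bar> \<le> a" "\<bar>y\<bar> \<le> b"
  shows "u^2 + y^2 \<le> 1/8" "norm (chart u y - p) < r" "norm (chart_du u y - E) < r" "norm (chart_dy u y - ey) < r"
proof -
  have "u^2 \<le> 1/16" "y^2 \<le> 1/16" using sq_small assms a b by auto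
  then show s: "u^2 + y^2 \<le> 1/8" by simp
  have "\<bar>u\<bar> \<le> 1" "\<bar>y\<bar> \<le> 1" using assms a b by auto
  from chart_dist[OF _ this] s have "norm (chart u y - p) \<le> 2 * (\<bar>u\<bar> + \<bar>y\<bar>)" by simp
  then have "norm (chart u y - p) \<le> 2 * \<bar>u\<bar> + 2 * \<bar>y\<bar>" by (simp add: distrib_left)
  then show "norm (chart u y - p) < r" using assms a(2) b(2) r(1) by linarith
  have s2: "u^2 + y^2 \<le> 1/2" using s by simp
  show "norm (chart_du u y - E) < r" using chart_du_dist[OF s2] assms a(2) r(1) by linarith
  show "norm (chart_dy u y - ey) < r" using chart_dy_dist[OF s2] assms b(2) r(1) by linarith
qed

definition "Dnorm u y = Det (chart u y) / d"

lemma in_disc: "\<bar>u\<bar> \<le> a \<Longrightarrow> \<bar>y\<bar> \<le> b \<Longrightarrow> u^2 + y^2 < 1"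
  using box_bounds(1)[of u y] by simp

lemma Dnorm_du:
  assumes "\<bar>u\<bar> \<le> a" "\<bar>y\<bar> \<le> b"
  shows "((\<lambda>u. Dnorm u y) has_real_derivative dDet (chart u y) (chart_du u y) / d) (at u)"
    "3/4 \<le> dDet (chart u y) (chart_du u y) / d" "dDet (chart u y) (chart_du u y) / d \<le> 5/4"
proof -
  show "((\<lambda>u. Dnorm u y) has_real_derivative dDet (chart u y) (chart_du u y) / d) (at u)"
    unfolding Dnorm_def by (rule DERIV_cdivide[OF chart_chain_u[OF Det_has_derivative in_disc[OF assms]]])
  have "\<bar>dDet (chart u y) (chart_du u y) - d\<bar> < \<bar>d\<bar>/4" using dDet_E box_bounds[OF assms] by blast
  moreover have "dDet (chart u y) (chart_du u y) / d - 1 = (dDet (chart u y) (chart_du u y) - d) / d" using dnz by (simp add: field_simps)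
  ultimately have "\<bar>dDet (chart u y) (chart_du u y) / d - 1\<bar> < 1/4"
    using dnz by (simp add: abs_divide divide_less_eq)
  then show "3/4 \<le> dDet (chart u y) (chart_du u y) / d" "dDet (chart u y) (chart_du u y) / d \<le> 5/4" by linarith+
qed

lemma Dnorm_dy:
  assumes "\<bar>u\<bar> \<le> a" "\<bar>y\<bar> \<le> b"
  shows "((\<lambda>y. Dnorm u y) has_real_derivative dDet (chart u y) (chart_dy u y) / d) (at y)"
    "\<bar>dDet (chart u y) (chart_dy u y) / d\<bar> \<le> Cy"
proof -
  show "((\<lambda>y. Dnorm u y) has_real_derivative dDet (chart u y) (chart_dy u y) / d) (at y)"
    unfolding Dnorm_def by (rule DERIV_cdivide[OF chart_chain_y[OF Det_has_derivative in_disc[OF assms]]])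
  have "\<bar>dDet (chart u y) (chart_dy u y)\<bar> \<le> Cy * \<bar>d\<bar>" using dDet_ey box_bounds[OF assms] by blast
  then show "\<bar>dDet (chart u y) (chart_dy u y) / d\<bar> \<le> Cy" using dnz by (simp add: abs_divide divide_le_eq)
qed

lemma Dnorm_origin: "Dnorm 0 0 = 0" by (simp add: Dnorm_def chart_origin Dp)

lemma Dnorm_mono:
  assumes "\<bar>y\<bar> \<le> b" "-a \<le> u1" "u1 \<le> u2" "u2 \<le> a"
  shows "Dnorm u2 y - Dnorm u1 y \<ge> 3/4 * (u2 - u1)"
proof (rule mvt_lower_bound[of "-a" a "\<lambda>u. Dnorm u y" "\<lambda>u. dDet (chart u y) (chart_du u y) / d"])
  fix x assume "-a \<le> x" "x \<le> a"
  then have x: "\<bar>x\<bar> \<le> a" by simp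
  show "((\<lambda>u. Dnorm u y) has_real_derivative dDet (chart x y) (chart_du x y) / d) (at x)" by (rule Dnorm_du(1)[OF x assms(1)])
  show "3/4 \<le> dDet (chart x y) (chart_du x y) / d" by (rule Dnorm_du(2)[OF x assms(1)])
qed (use assms in auto)

lemma Dnorm_y_lipschitz:
  assumes "\<bar>u\<bar> \<le> a" "\<bar>y1\<bar> \<le> b" "\<bar>y2\<bar> \<le> b"
  shows "\<bar>Dnorm u y1 - Dnorm u y2\<bar> \<le> Cy * \<bar>y1 - y2\<bar>"
proof (rule mvt_abs_bound[of "-b" b "\<lambda>y. Dnorm u y" "\<lambda>y. dDet (chart u y) (chart_dy u y) / d"])
  fix x assume "-b \<le> x" "x \<le> b"
  then have x: "\<bar>x\<bar> \<le> b" by simp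
  show "((\<lambda>y. Dnorm u y) has_real_derivative dDet (chart u x) (chart_dy u x) / d) (at x)" by (rule Dnorm_dy(1)[OF assms(1) x])
  show "\<bar>dDet (chart u x) (chart_dy u x) / d\<bar> \<le> Cy" by (rule Dnorm_dy(2)[OF assms(1) x])
qed (use assms in auto)

lemma Dnorm_ends:
  assumes "\<bar>y\<bar> \<le> b"
  shows "Dnorm a y \<ge> a/4" "Dnorm (-a) y \<le> -a/4"
proof -
  have b0: "\<bar>0::real\<bar> \<le> b" using b by simp
  have "Dnorm a 0 - Dnorm 0 0 \<ge> 3/4 * (a - 0)" using Dnorm_mono[OF b0, of 0 a] a by simp
  moreover have "Dnorm 0 0 - Dnorm (-a) 0 \<ge> 3/4 * (0 - (-a))" using Dnorm_mono[OF b0, of "-a" 0] a by simp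
  moreover have "\<bar>Dnorm a y - Dnorm a 0\<bar> \<le> Cy * \<bar>y - 0\<bar>" using Dnorm_y_lipschitz[of a y 0] assms a b by simp
  moreover have "\<bar>Dnorm (-a) y - Dnorm (-a) 0\<bar> \<le> Cy * \<bar>y - 0\<bar>" using Dnorm_y_lipschitz[of "-a" y 0] assms a b by simp
  moreover have "Cy * \<bar>y\<bar> \<le> a/2"
  proof -
    have "Cy * \<bar>y\<bar> \<le> Cy * b" using assms Cy by (simp add: mult_left_mono)
    also have "\<dots> \<le> b * (Cy + 1)" using b by (simp add: algebra_simps)
    finally show ?thesis using b by linarith
  qed
  ultimately show "Dnorm a y \<ge> a/4" "Dnorm (-a) y \<le> -a/4" using Dnorm_origin by auto
qed

lemma Dnorm_continuous_u: assumes "\<bar>y\<bar> \<le> b" shows "continuous_on {-a..a} (\<lambda>u. Dnorm u y)"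
proof (rule continuous_at_imp_continuous_on, rule ballI)
  fix x assume "x \<in> {-a..a}"
  then have "\<bar>x\<bar> \<le> a" by auto
  from DERIV_isCont[OF Dnorm_du(1)[OF this assms]] show "isCont (\<lambda>u. Dnorm u y) x" .
qed

lemma Dnorm_separation:
  assumes "\<bar>y\<bar> \<le> b" "-a \<le> u1" "u1 \<le> a" "-a \<le> u2" "u2 \<le> a"
  shows "3/4 * \<bar>u1 - u2\<bar> \<le> \<bar>Dnorm u1 y - Dnorm u2 y\<bar>"
proof (cases "u1 \<le> u2")
  case True then show ?thesis using Dnorm_mono[OF assms(1), of u1 u2] assms by auto
next
  case False then show ?thesis using Dnorm_mono[OF assms(1), of u2 u1] assms by auto
qed

lemma graph_exists: assumes "\<bar>y\<bar> \<le> b" shows "\<exists>u. -a \<le> u \<and> u \<le> a \<and> Dnorm u y = 0"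
proof -
  have "Dnorm (-a) y \<le> 0" "0 \<le> Dnorm a y" using Dnorm_ends[OF assms] a by auto
  then show ?thesis using IVT'[of "\<lambda>u. Dnorm u y" "-a" 0 a] Dnorm_continuous_u[OF assms] a by auto
qed

lemma graph_unique:
  assumes "\<bar>y\<bar> \<le> b" "-a \<le> u1" "u1 \<le> a" "Dnorm u1 y = 0" "-a \<le> u2" "u2 \<le> a" "Dnorm u2 y = 0"
  shows "u1 = u2"
  using Dnorm_separation[OF assms(1-3,5,6)] assms(4,7) by simp

text \<open>In the box, {Det = 0} is the graph u = graph_u y of a function.\<close>
definition "graph_u y = (THE u. -a \<le> u \<and> u \<le> a \<and> Dnorm u y = 0)"

lemma graph_u_props:
  assumes "\<bar>y\<bar> \<le> b"
  shows "-a \<le> graph_u y" "graph_u y \<le> a" "Dnorm (graph_u y) y = 0" "\<bar>graph_u y\<bar> < a"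
proof -
  have "\<exists>!u. -a \<le> u \<and> u \<le> a \<and> Dnorm u y = 0" using graph_exists[OF assms] graph_unique[OF assms] by blast
  from theI'[OF this] show h: "-a \<le> graph_u y" "graph_u y \<le> a" "Dnorm (graph_u y) y = 0" unfolding graph_u_def by auto
  have "graph_u y \<noteq> a" "graph_u y \<noteq> -a" using h(3) Dnorm_ends[OF assms] a by auto
  then show "\<bar>graph_u y\<bar> < a" using h by auto
qed

lemma graph_u_eq: "\<bar>y\<bar> \<le> b \<Longrightarrow> -a \<le> u \<Longrightarrow> u \<le> a \<Longrightarrow> Dnorm u y = 0 \<Longrightarrow> u = graph_u y"
  using graph_unique graph_u_props by blast


lemma graph_u_lipschitz:
  assumes "\<bar>y1\<bar> \<le> b" "\<bar>y2\<bar> \<le> b"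
  shows "\<bar>graph_u y1 - graph_u y2\<bar> \<le> 2 * Cy * \<bar>y1 - y2\<bar>"
proof -
  have s: "3/4 * \<bar>graph_u y1 - graph_u y2\<bar> \<le> \<bar>Dnorm (graph_u y1) y1 - Dnorm (graph_u y2) y1\<bar>"
    by (rule Dnorm_separation[OF assms(1) graph_u_props(1)[OF assms(1)] graph_u_props(2)[OF assms(1)] graph_u_props(1)[OF assms(2)] graph_u_props(2)[OF assms(2)]])
  have "\<bar>Dnorm (graph_u y1) y1 - Dnorm (graph_u y2) y1\<bar> = \<bar>Dnorm (graph_u y2) y2 - Dnorm (graph_u y2) y1\<bar>"
    using graph_u_props(3)[OF assms(1)] graph_u_props(3)[OF assms(2)] by simp
  also have "\<dots> \<le> Cy * \<bar>y2 - y1\<bar>"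
    using Dnorm_y_lipschitz[of "graph_u y2" y2 y1] graph_u_props[OF assms(2)] assms by simp
  finally have "3/4 * \<bar>graph_u y1 - graph_u y2\<bar> \<le> Cy * \<bar>y1 - y2\<bar>" using s by (simp add: abs_minus_commute)
  moreover have "Cy * \<bar>y1 - y2\<bar> \<ge> 0" using Cy by simp
  moreover have "\<And>X Y::real. 3/4 * X \<le> Y \<Longrightarrow> 0 \<le> Y \<Longrightarrow> X \<le> 2 * Y" by linarith
  ultimately have "\<bar>graph_u y1 - graph_u y2\<bar> \<le> 2 * (Cy * \<bar>y1 - y2\<bar>)" by blast
  then show ?thesis by (simp add: mult.assoc)
qed

definition "graph_pt y = chart (graph_u y) y"

lemma graph_pt_props:
  assumes y: "\<bar>y\<bar> \<le> b"
  shows "graph_pt y \<in> sphere2" "graph_pt y $2 = y" "graph_pt y \<bullet> E = graph_u y" "graph_pt y \<bullet> p > 0"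
    "norm (graph_pt y - p) < r" "Det (graph_pt y) = 0"
proof -
  have hb: "\<bar>graph_u y\<bar> \<le> a" using graph_u_props[OF y] by simp
  have s: "(graph_u y)^2 + y^2 \<le> 1/8" by (rule box_bounds(1)[OF hb y])
  show "graph_pt y \<in> sphere2" unfolding graph_pt_def sphere2_def
    using chart_on_sphere[of "graph_u y" y] s by (simp add: norm_eq_sqrt_inner)
  show "graph_pt y $2 = y" by (simp add: graph_pt_def chart_components)
  show "graph_pt y \<bullet> E = graph_u y" by (simp add: graph_pt_def chart_inner_E)
  have "chart_weight (graph_u y) y \<ge> 1/2" using chart_weight_ge s by simp
  then show "graph_pt y \<bullet> p > 0" by (simp add: graph_pt_def chart_inner_p)
  show "norm (graph_pt y - p) < r" unfolding graph_pt_def by (rule box_bounds(2)[OF hb y])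
  have "Dnorm (graph_u y) y = 0" by (rule graph_u_props(3)[OF y])
  then show "Det (graph_pt y) = 0" using dnz by (simp add: Dnorm_def graph_pt_def)
qed

text \<open>The graph lies in the closed upper hemisphere: if p_3 > 0 because the box is small
  (a \<le> p_3/4); if p is on the equator because the equator is invariant, so Det vanishes
  along u = 0 and the graph is the equator itself.\<close>
lemma graph_pt_upper:
  assumes y: "\<bar>y\<bar> \<le> b"
  shows "graph_pt y $3 \<ge> 0"
proof (cases "p$3 > 0")
  case True
  have hb: "\<bar>graph_u y\<bar> \<le> a" using graph_u_props[OF y] by simp
  have "(graph_u y)^2 + y^2 \<le> 1/8" by (rule box_bounds(1)[OF hb y])
  then have n: "chart_weight (graph_u y) y \<ge> 1/2" using chart_weight_ge by simp
  have "p$1^2 \<le> 1" using p13 by (metis le_add_same_cancel1 zero_le_power2)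
  then have p1: "\<bar>p$1\<bar> \<le> 1" by (simp add: abs_square_le_1)
  have "\<bar>graph_u y * p$1\<bar> = \<bar>graph_u y\<bar> * \<bar>p$1\<bar>" by (simp add: abs_mult)
  also have "\<dots> \<le> \<bar>graph_u y\<bar>" using p1 by (rule mult_left_le) simp
  finally have "\<bar>graph_u y * p$1\<bar> \<le> a" using hb by simp
  moreover have "chart_weight (graph_u y) y * p$3 \<ge> 1/2 * p$3" using n True by (simp add: mult_right_mono)
  moreover have "a \<le> p$3/4" using a(4) True by simp
  ultimately have "chart_weight (graph_u y) y * p$3 + graph_u y * p$1 \<ge> 0" by linarith
  then show ?thesis by (simp add: graph_pt_def chart_components)
next
  case False
  then have p30: "p$3 = 0" using p3 by simp
  have c3: "chart 0 y $3 = 0" by (simp add: chart_components p30)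
  have "Dnorm 0 y = 0"
    unfolding Dnorm_def Det_def using triple_equator_zero[OF eU[OF c3] eV[OF c3] c3] by simp
  then have "graph_u y = 0" using graph_u_eq[OF y, of 0] a by simp
  then show ?thesis by (simp add: graph_pt_def chart_components p30)
qed


text \<open>Along the graph the y-component of a C^1 field varies in a Lipschitz way, by the
  mean value theorem in u and then in y.\<close>
lemma component_graph_lipschitz:
  assumes dF: "\<And>q. (F has_derivative DF q) (at q)"
    and bound: "\<forall>q h. norm (q - p) < r \<longrightarrow> (norm (h - E) < r \<or> norm (h - ey) < r) \<longrightarrow> \<bar>DF q h $2\<bar> \<le> B"
    and y: "\<bar>y1\<bar> \<le> b" "\<bar>y2\<bar> \<le> b"
  shows "\<bar>F (graph_pt y1) $2 - F (graph_pt y2) $2\<bar> \<le> B * (2*Cy + 1) * \<bar>y1 - y2\<bar>"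
proof -
  have B0: "B \<ge> 0" using bound r(1) by (metis abs_ge_zero diff_self norm_zero order_trans)
  have dF2: "\<And>q. ((\<lambda>x. F x $ 2) has_derivative (\<lambda>h. DF q h $ 2)) (at q)"
    by (rule has_derivative_nth[OF dF])
  have h1: "\<bar>graph_u y1\<bar> \<le> a" and h2: "\<bar>graph_u y2\<bar> \<le> a"
    using graph_u_props(4) y by (auto intro: less_imp_le)
  have A: "\<bar>F (chart (graph_u y1) y1) $2 - F (chart (graph_u y2) y1) $2\<bar> \<le> B * \<bar>graph_u y1 - graph_u y2\<bar>"
  proof (rule mvt_abs_bound[of "-a" a _ "\<lambda>u. DF (chart u y1) (chart_du u y1) $2"])
    fix x assume "-a \<le> x" "x \<le> a"
    then have x: "\<bar>x\<bar> \<le> a" by simp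
    show "((\<lambda>u. F (chart u y1) $2) has_real_derivative DF (chart x y1) (chart_du x y1) $2) (at x)"
      by (rule chart_chain_u[OF dF2 in_disc[OF x y(1)]])
    show "\<bar>DF (chart x y1) (chart_du x y1) $2\<bar> \<le> B" using bound box_bounds[OF x y(1)] by blast
  qed (use h1 h2 in auto)
  have C: "\<bar>F (chart (graph_u y2) y1) $2 - F (chart (graph_u y2) y2) $2\<bar> \<le> B * \<bar>y1 - y2\<bar>"
  proof (rule mvt_abs_bound[of "-b" b _ "\<lambda>y. DF (chart (graph_u y2) y) (chart_dy (graph_u y2) y) $2"])
    fix x assume "-b \<le> x" "x \<le> b"
    then have x: "\<bar>x\<bar> \<le> b" by simp
    show "((\<lambda>y. F (chart (graph_u y2) y) $2) has_real_derivative
        DF (chart (graph_u y2) x) (chart_dy (graph_u y2) x) $2) (at x)"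
      by (rule chart_chain_y[OF dF2 in_disc[OF h2 x]])
    show "\<bar>DF (chart (graph_u y2) x) (chart_dy (graph_u y2) x) $2\<bar> \<le> B"
      using bound box_bounds[OF h2 x] by blast
  qed (use y in auto)
  have "B * \<bar>graph_u y1 - graph_u y2\<bar> \<le> B * (2*Cy*\<bar>y1 - y2\<bar>)"
    using graph_u_lipschitz[OF y] B0 by (rule mult_left_mono)
  moreover have "B * (2*Cy + 1) * \<bar>y1 - y2\<bar> = B * (2*Cy*\<bar>y1 - y2\<bar>) + B * \<bar>y1 - y2\<bar>"
    by (simp add: algebra_simps)
  ultimately show ?thesis using A C unfolding graph_pt_def by linarith
qed

lemma graph_u_continuous: "continuous_on {-b..b} graph_u"
proof (rule lipschitz_on_continuous_on)
  show "(2*Cy)-lipschitz_on {-b..b} graph_u"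
    using graph_u_lipschitz Cy by (intro lipschitz_onI) (auto simp: dist_real_def)
qed

lemma graph_pt_continuous: "continuous_on {-b..b} graph_pt"
proof -
  have "continuous_on {-b..b} (\<lambda>y. (graph_u y, y))" by (intro continuous_intros graph_u_continuous)
  moreover have "(\<lambda>y. (graph_u y, y)) ` {-b..b} \<subseteq> {(u,y). u^2 + y^2 < 1}"
  proof
    fix z assume "z \<in> (\<lambda>y. (graph_u y, y)) ` {-b..b}"
    then obtain y where y: "-b \<le> y" "y \<le> b" "z = (graph_u y, y)" by auto
    then have yb: "\<bar>y\<bar> \<le> b" by simp
    have "\<bar>graph_u y\<bar> \<le> a" using graph_u_props(4)[OF yb] by simp
    from in_disc[OF this yb] show "z \<in> {(u,y). u^2 + y^2 < 1}" using y by simp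
  qed
  ultimately show ?thesis
    unfolding graph_pt_def using continuous_on_compose2[OF chart_continuous] by fastforce
qed

lemma frame_rho_pos: "q \<bullet> p > 0 \<Longrightarrow> frame_rho q > 0"
proof -
  assume "q \<bullet> p > 0"
  then have "q$1*p$1 + q$3*p$3 > 0" by (simp add: inner3 p2)
  then have "\<not> (q$1 = 0 \<and> q$3 = 0)" by auto
  then have "q$1^2 + q$3^2 > 0" by (auto simp: add_pos_nonneg add_nonneg_pos)
  then show ?thesis by (simp add: frame_rho_def)
qed

text \<open>The neighbourhood V of p in the theorem: the chart image of the open box.\<close>
definition "Nbhd = {q \<in> upper_hemi. \<bar>q \<bullet> E\<bar> < a \<and> \<bar>q$2\<bar> < b \<and> q \<bullet> p > 0}"

lemma Nbhd_open: "openin (top_of_set upper_hemi) Nbhd"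
proof -
  have "open {q::real^3. \<bar>q \<bullet> E\<bar> < a \<and> \<bar>q$2\<bar> < b \<and> q \<bullet> p > 0}"
    by (intro open_Collect_conj open_Collect_less continuous_intros)
  moreover have "Nbhd = upper_hemi \<inter> {q::real^3. \<bar>q \<bullet> E\<bar> < a \<and> \<bar>q$2\<bar> < b \<and> q \<bullet> p > 0}"
    unfolding Nbhd_def by auto
  ultimately show ?thesis by (auto simp: openin_open)
qed

lemma p_in_Nbhd: "p \<in> Nbhd"
  using pS p3 pp a b unfolding Nbhd_def upper_hemi_def by (simp add: p2 E_def inner3)

lemma near_p:
  assumes "norm (q - p) < r"
  shows "U q $2 * V q $2 < 0" "\<bar>U q $2 - V q $2\<bar> \<ge> cw" "V q $2 \<noteq> 0" "U q $2 \<noteq> 0"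
    "U p $2 > 0 \<longrightarrow> U q $2 > 0" "U p $2 < 0 \<longrightarrow> U q $2 < 0"
    "V p $2 > 0 \<longrightarrow> V q $2 > 0" "V p $2 < 0 \<longrightarrow> V q $2 < 0"
  using perturbed_opposite_signs[OF sg, of "U q $2" "V q $2"] signs_near assms cw by auto

lemma Wreg_second: "Wreg \<epsilon> q $2 = \<phi> (q$2/\<epsilon>) * (U q $2 - V q $2) + V q $2"
  by (simp add: reg_def algebra_simps)

lemma singular_point_on_graph:
  assumes eps: "\<epsilon> > 0" and q: "q \<in> Nbhd" "sing_point_S2 (Wreg \<epsilon>) q"
  shows "\<bar>q$2\<bar> < b" "q = graph_pt (q$2)" "norm (q - p) < r"
    "\<phi> (q$2/\<epsilon>) * (U q $2 - V q $2) + V q $2 = 0" "\<bar>\<phi> (q$2/\<epsilon>) - tstar\<bar> < \<delta>t" "frame_rho q > 0"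
proof -
  have qS: "q \<in> sphere2" and W0: "Wreg \<epsilon> q = 0" using q(2) by (auto simp: sing_point_S2_def)
  have qq: "q \<bullet> q = 1" using qS by (simp add: sphere2_def norm_eq_1)
  have qV: "\<bar>q \<bullet> E\<bar> < a" "\<bar>q$2\<bar> < b" "q \<bullet> p > 0" using q(1) by (auto simp: Nbhd_def)
  then show "\<bar>q$2\<bar> < b" "frame_rho q > 0" using frame_rho_pos by auto
  have dec: "q = chart (q \<bullet> E) (q$2)" by (rule chart_inverse(1)[OF qq qV(3)])
  have ub: "\<bar>q \<bullet> E\<bar> \<le> a" "\<bar>q$2\<bar> \<le> b" using qV by auto
  show nr: "norm (q - p) < r" using box_bounds(2)[OF ub] dec by simp
  define t where "t = \<phi> (q$2/\<epsilon>)"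
  show G0: "\<phi> (q$2/\<epsilon>) * (U q $2 - V q $2) + V q $2 = 0" using W0 Wreg_second[of \<epsilon> q] by simp
  have nz: "V q $2 - U q $2 \<noteq> 0" using near_p(1)[OF nr] by auto
  have "t = V q $2 / (V q $2 - U q $2)" using G0 nz unfolding t_def by (simp add: field_simps)
  then show "\<bar>\<phi> (q$2/\<epsilon>) - tstar\<bar> < \<delta>t" using ratio_near nr unfolding t_def by simp
  have t0: "t \<noteq> 0" using G0 near_p(3)[OF nr] unfolding t_def by auto
  have eq: "(1 - t) *\<^sub>R V q + t *\<^sub>R U q = 0" using W0 unfolding reg_def t_def by simp
  have "0 = triple ((1 - t) *\<^sub>R V q + t *\<^sub>R U q) (V q) q" by (simp only: eq) (simp add: triple_expand)
  also have "\<dots> = t * Det q" by (simp add: triple_linear_left triple_repeated Det_def)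
  finally have "t * Det q = 0" by simp
  then have "Det q = 0" using t0 by simp
  then have "Dnorm (q \<bullet> E) (q$2) = 0" using dec by (simp add: Dnorm_def)
  then have "q \<bullet> E = graph_u (q$2)" using graph_u_eq[OF ub(2)] ub(1) by auto
  then show "q = graph_pt (q$2)" using dec by (simp add: graph_pt_def)
qed

lemma cw_pos: "cw > 0" using sg cw by (auto simp: mult_less_0_iff)

text \<open>Along the graph the y-component of the regularization changes sign between y = -b and
  y = b (where it equals V_y, resp. U_y, as eps \<le> b), so it vanishes inside.\<close>
lemma graph_crossing:
  assumes eps: "0 < \<epsilon>" "\<epsilon> \<le> b"
  shows "\<exists>y. \<bar>y\<bar> < b \<and> Wreg \<epsilon> (graph_pt y) $2 = 0"
proof -
  define G where "G y = \<phi> (y/\<epsilon>) * (U (graph_pt y) $2 - V (graph_pt y) $2) + V (graph_pt y) $2" for y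
  have cU': "continuous_on {-b..b} (\<lambda>y. U (graph_pt y))"
    by (rule continuous_on_compose2[OF U_cont graph_pt_continuous]) auto
  have cV': "continuous_on {-b..b} (\<lambda>y. V (graph_pt y))"
    by (rule continuous_on_compose2[OF V_cont graph_pt_continuous]) auto
  have cP: "continuous_on {-b..b} (\<lambda>y. \<phi> (y/\<epsilon>))"
    by (rule continuous_on_compose2[OF transition_continuous[OF tf]])
      (use eps in \<open>auto intro!: continuous_intros\<close>)
  have Gc: "continuous_on {-b..b} G"
    unfolding G_def by (intro continuous_intros cU' cV' cP)
  have z: "\<forall>t \<le> -1. \<phi> t = 0" and o: "\<forall>t \<ge> 1. \<phi> t = 1"
    using tf unfolding transition_function_def by auto
  have "b/\<epsilon> \<ge> 1" using eps by (simp add: le_divide_eq)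
  then have ph: "\<phi> (-b/\<epsilon>) = 0" "\<phi> (b/\<epsilon>) = 1" using z o by auto
  have bb: "\<bar>-b\<bar> \<le> b" "\<bar>b\<bar> \<le> b" using b by auto
  have G1: "G (-b) = V (graph_pt (-b)) $2" "G b = U (graph_pt b) $2" unfolding G_def using ph by auto
  have n1: "norm (graph_pt (-b) - p) < r" "norm (graph_pt b - p) < r"
    using graph_pt_props(5)[OF bb(1)] graph_pt_props(5)[OF bb(2)] by auto
  obtain y where y: "-b \<le> y" "y \<le> b" "G y = 0"
  proof (cases "U p $2 > 0")
    case True
    then have "V p $2 < 0" using sg by (auto simp: mult_less_0_iff)
    then have "G (-b) \<le> 0" "0 \<le> G b" using G1 near_p(5,8)[OF n1(1)] near_p(5)[OF n1(2)] True by auto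
    then show ?thesis using IVT'[of G "-b" 0 b] Gc b that by auto
  next
    case False
    then have "U p $2 < 0" "V p $2 > 0" using sg by (auto simp: mult_less_0_iff)
    then have "G b \<le> 0" "0 \<le> G (-b)" using G1 near_p(6)[OF n1(2)] near_p(7)[OF n1(1)] by auto
    then show ?thesis using IVT2'[of G b 0 "-b"] Gc b that by auto
  qed
  have "y \<noteq> b" "y \<noteq> -b" using y G1 near_p(3,4) n1 by auto
  then have "\<bar>y\<bar> < b" using y by auto
  moreover have "Wreg \<epsilon> (graph_pt y) $2 = 0"
    using y(3) graph_pt_props(2)[OF \<open>\<bar>y\<bar> < b\<close>[THEN less_imp_le]] unfolding Wreg_second G_def by simp
  ultimately show ?thesis by blast
qed

text \<open>On the graph U and V are parallel, so a vanishing y-component forces W = 0.\<close>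
lemma graph_zero:
  assumes y: "\<bar>y\<bar> \<le> b" and W2: "Wreg \<epsilon> (graph_pt y) $2 = 0"
  shows "Wreg \<epsilon> (graph_pt y) = 0"
proof -
  define q where "q = graph_pt y"
  have qS: "q \<in> sphere2" and qp: "q \<bullet> p > 0" and qr: "norm (q - p) < r" and Dq: "Det q = 0"
    using graph_pt_props[OF y] unfolding q_def by auto
  have "Wreg \<epsilon> q = 0"
  proof (rule horizontal_parallel_tangent_zero)
    show "q \<bullet> q = 1" using qS by (simp add: sphere2_def norm_eq_1)
    show "0 < q$1^2 + q$3^2" using frame_rho_pos[OF qp] by (simp add: frame_rho_def)
    show "Wreg \<epsilon> q \<bullet> q = 0"
      using tU[OF qS] tV[OF qS] by (simp add: reg_def inner_commute[of _ q] inner_add_right)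
    show "V q \<bullet> q = 0" using tV[OF qS] by (simp add: inner_commute)
    show "Wreg \<epsilon> q $ 2 = 0" using W2 unfolding q_def .
    show "V q $ 2 \<noteq> 0" using near_p(3)[OF qr] .
    show "triple (Wreg \<epsilon> q) (V q) q = 0"
      unfolding reg_def triple_linear_left triple_repeated using Dq by (simp add: Det_def)
  qed
  then show ?thesis unfolding q_def .
qed

lemma singular_point_exists:
  assumes eps: "0 < \<epsilon>" "\<epsilon> \<le> b"
  shows "\<exists>q. q \<in> Nbhd \<and> sing_point_S2 (Wreg \<epsilon>) q"
proof -
  obtain y where y: "\<bar>y\<bar> < b" "Wreg \<epsilon> (graph_pt y) $2 = 0" using graph_crossing[OF eps] by blast
  then have yb: "\<bar>y\<bar> \<le> b" by simp
  note G = graph_pt_props[OF yb]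
  have "graph_pt y \<in> Nbhd"
    unfolding Nbhd_def upper_hemi_def using G graph_pt_upper[OF yb] y(1) graph_u_props(4)[OF yb] by auto
  moreover have "Wreg \<epsilon> (graph_pt y) = 0" by (rule graph_zero[OF yb y(2)])
  ultimately show ?thesis using G(1) by (auto simp: sing_point_S2_def)
qed

definition "LU = BU * (2*Cy + 1)"
definition "LV = BV * (2*Cy + 1)"

lemma LU0: "LU \<ge> 0"
proof -
  have "BU \<ge> 0" using DU_y_bound r(1) by (metis abs_ge_zero diff_self norm_zero order_trans)
  then show ?thesis unfolding LU_def using Cy by simp
qed

lemma LV0: "LV \<ge> 0"
proof -
  have "BV \<ge> 0" using DV_y_bound r(1) by (metis abs_ge_zero diff_self norm_zero order_trans)
  then show ?thesis unfolding LV_def using Cy by simp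
qed

lemma phi_incr:
  assumes "s1 \<le> s2" "\<bar>\<phi> s1 - tstar\<bar> < \<delta>t" "\<bar>\<phi> s2 - tstar\<bar> < \<delta>t"
  shows "\<phi> s2 - \<phi> s1 \<ge> c\<phi> * (s2 - s1)"
proof (rule mvt_lower_bound[of s1 s2 \<phi> "deriv \<phi>"])
  fix x assume x: "s1 \<le> x" "x \<le> s2"
  show "(\<phi> has_real_derivative deriv \<phi> x) (at x)" by (rule transition_has_derivative[OF tf])
  have "\<phi> s1 \<le> \<phi> x" "\<phi> x \<le> \<phi> s2" using transition_mono[OF tf] x by auto
  then have "tstar - \<delta>t \<le> \<phi> x \<and> \<phi> x \<le> tstar + \<delta>t" using assms(2,3) by auto
  then show "c\<phi> \<le> deriv \<phi> x" using slope_bound(2) by blast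
qed (use assms in auto)

text \<open>Two zeros at heights y < y' are impossible: subtracting their y-component equations, the
  increment of phi (at least c_phi (y'-y)/eps) cannot be compensated by the Lipschitz variation
  of U_y and V_y when eps is small.\<close>
lemma no_singular_point_above:
  assumes eps: "0 < \<epsilon>" "\<epsilon> \<le> c\<phi> * cw / (2 * ((LU + LV) + LV + 1))"
    and q: "q \<in> Nbhd" "sing_point_S2 (Wreg \<epsilon>) q" and q': "q' \<in> Nbhd" "sing_point_S2 (Wreg \<epsilon>) q'"
    and lt: "q$2 < q'$2"
  shows False
proof -
  note c = singular_point_on_graph[OF eps(1) q] and c' = singular_point_on_graph[OF eps(1) q']
  define y where "y = q$2"
  define y' where "y' = q'$2"
  have yb: "\<bar>y\<bar> \<le> b" "\<bar>y'\<bar> \<le> b" using c(1) c'(1) unfolding y_def y'_def by auto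
  have "\<phi> (y'/\<epsilon>) - \<phi> (y/\<epsilon>) \<ge> c\<phi> * (y'/\<epsilon> - y/\<epsilon>)"
    by (rule phi_incr) (use lt eps c(5) c'(5) in \<open>auto simp: y_def y'_def divide_right_mono\<close>)
  moreover have "c\<phi> * (y'/\<epsilon> - y/\<epsilon>) = c\<phi> * (y' - y) / \<epsilon>" by (simp add: diff_divide_distrib[symmetric])
  ultimately have P: "\<phi> (y'/\<epsilon>) - \<phi> (y/\<epsilon>) \<ge> c\<phi> * (y' - y) / \<epsilon>" by simp
  have qq: "q = graph_pt y" "q' = graph_pt y'" using c(2) c'(2) unfolding y_def y'_def by auto
  have lu: "\<bar>U q' $2 - U q $2\<bar> \<le> LU * (y' - y)"
    using component_graph_lipschitz[OF dU DU_y_bound yb(2) yb(1)] lt qq unfolding LU_def y_def y'_def by simp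
  have lv: "\<bar>V q' $2 - V q $2\<bar> \<le> LV * (y' - y)"
    using component_graph_lipschitz[OF dV DV_y_bound yb(2) yb(1)] lt qq unfolding LV_def y_def y'_def by simp
  have lw: "\<bar>(U q' $2 - V q' $2) - (U q $2 - V q $2)\<bar> \<le> (LU + LV) * (y' - y)"
  proof -
    have "\<bar>(U q' $2 - V q' $2) - (U q $2 - V q $2)\<bar> \<le> \<bar>U q' $2 - U q $2\<bar> + \<bar>V q' $2 - V q $2\<bar>" by linarith
    then show ?thesis using lu lv by (simp add: distrib_right)
  qed
  have eq: "(\<phi> (y'/\<epsilon>) - \<phi> (y/\<epsilon>)) * (U q' $2 - V q' $2) + \<phi> (y/\<epsilon>) * ((U q' $2 - V q' $2) - (U q $2 - V q $2))
      + (V q' $2 - V q $2) = 0"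
  proof -
    have "\<phi> (y'/\<epsilon>) * (U q' $2 - V q' $2) + V q' $2 = 0" "\<phi> (y/\<epsilon>) * (U q $2 - V q $2) + V q $2 = 0"
      using c(4) c'(4) unfolding y_def y'_def by auto
    then show ?thesis by (simp add: algebra_simps)
  qed
  show False
  proof (rule no_second_zero_arith[OF _ P slope_bound(1) eps(1) near_p(2)[OF c'(3)] cw_pos eq _ _ lw lv _ LV0 eps(2)])
    show "0 < y' - y" using lt unfolding y_def y'_def by simp
    show "0 \<le> \<phi> (y/\<epsilon>)" "\<phi> (y/\<epsilon>) \<le> 1" using transition_range[OF tf] by auto
    show "0 \<le> LU + LV" using LU0 LV0 by simp
  qed
qed

lemma singular_point_unique:
  assumes eps: "0 < \<epsilon>" "\<epsilon> \<le> c\<phi> * cw / (2 * ((LU + LV) + LV + 1))"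
    and q: "q \<in> Nbhd" "sing_point_S2 (Wreg \<epsilon>) q" and q': "q' \<in> Nbhd" "sing_point_S2 (Wreg \<epsilon>) q'"
  shows "q = q'"
proof -
  have "q$2 = q'$2"
  proof (rule ccontr)
    assume "q$2 \<noteq> q'$2"
    then consider "q$2 < q'$2" | "q'$2 < q$2" by linarith
    then show False
    proof cases
      case 1 then show False using no_singular_point_above[OF eps q q'] by simp
    next
      case 2 then show False using no_singular_point_above[OF eps q' q] by simp
    qed
  qed
  then show ?thesis using singular_point_on_graph(2)[OF eps(1) q] singular_point_on_graph(2)[OF eps(1) q'] by metis
qed

text \<open>The threshold for phi'/eps in saddle_or_node_arith.\<close>
definition "A0 = 8*Mb/cw + 48*\<bar>d\<bar>/cw^2 + 4*Mb^2/\<bar>d\<bar> + 1"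

lemma A0_pos: "A0 > 0"
  using entries_bound(2) cw_pos dnz unfolding A0_def by (simp add: add_nonneg_pos)

lemma singular_point_hyperbolic:
  assumes eps: "0 < \<epsilon>" "\<epsilon> \<le> c\<phi> / A0"
    and q: "q \<in> Nbhd" "sing_point_S2 (Wreg \<epsilon>) q"
  shows "hyperbolic_saddle (Wreg \<epsilon>) q \<or> hyperbolic_node (Wreg \<epsilon>) q"
proof -
  note c = singular_point_on_graph[OF eps(1) q]
  have qS: "q \<in> sphere2" and W0: "Wreg \<epsilon> q = 0" using q(2) by (auto simp: sing_point_S2_def)
  have n: "norm (q - p) < rK" using c(3) r by simp
  have t: "\<bar>\<phi> (q$2/\<epsilon>) - tstar\<bar> < rK" using c(5) delta_t by simp
  note H = entries_bound(3)[rule_format, OF n t]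
  have "tstar - \<delta>t \<le> \<phi> (q$2/\<epsilon>) \<and> \<phi> (q$2/\<epsilon>) \<le> tstar + \<delta>t" using c(5) by auto
  then have dphi: "deriv \<phi> (q$2/\<epsilon>) \<ge> c\<phi>" using slope_bound(2) by blast
  have "A0 \<le> c\<phi> / \<epsilon>" using eps A0_pos by (simp add: le_divide_eq mult.commute)
  also have "\<dots> \<le> deriv \<phi> (q$2/\<epsilon>) / \<epsilon>" using dphi eps by (simp add: divide_right_mono)
  finally have A: "deriv \<phi> (q$2/\<epsilon>) / \<epsilon> \<ge> A0" .
  show ?thesis
    by (rule saddle_or_node_at[OF qS c(6) W0 eps(1) _ _ _ _ _ refl near_p(2)[OF c(3)] cw_pos A[unfolded A0_def]])
      (use H in auto)
qed

lemma box_theorem: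
  "\<exists>\<epsilon>0>0. \<forall>\<epsilon>. 0 < \<epsilon> \<and> \<epsilon> \<le> \<epsilon>0 \<longrightarrow>
     (\<exists>!q. q \<in> Nbhd \<and> sing_point_S2 (Wreg \<epsilon>) q) \<and>
     (\<forall>q. q \<in> Nbhd \<and> sing_point_S2 (Wreg \<epsilon>) q \<longrightarrow> hyperbolic_saddle (Wreg \<epsilon>) q \<or> hyperbolic_node (Wreg \<epsilon>) q)"
proof -
  define e0 where "e0 = min b (min (c\<phi> * cw / (2 * ((LU + LV) + LV + 1))) (c\<phi> / A0))"
  have "2 * ((LU + LV) + LV + 1) > 0" using LU0 LV0 by simp
  then have "e0 > 0" unfolding e0_def using b(1) slope_bound(1) cw_pos A0_pos by simp
  moreover have "\<forall>\<epsilon>. 0 < \<epsilon> \<and> \<epsilon> \<le> e0 \<longrightarrow>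
     (\<exists>!q. q \<in> Nbhd \<and> sing_point_S2 (Wreg \<epsilon>) q) \<and>
     (\<forall>q. q \<in> Nbhd \<and> sing_point_S2 (Wreg \<epsilon>) q \<longrightarrow> hyperbolic_saddle (Wreg \<epsilon>) q \<or> hyperbolic_node (Wreg \<epsilon>) q)"
  proof (intro allI impI)
    fix \<epsilon> assume e: "0 < \<epsilon> \<and> \<epsilon> \<le> e0"
    then have e_le: "0 < \<epsilon>" "\<epsilon> \<le> b" "\<epsilon> \<le> c\<phi> * cw / (2 * ((LU + LV) + LV + 1))" "\<epsilon> \<le> c\<phi> / A0"
      unfolding e0_def by auto
    have "\<exists>!q. q \<in> Nbhd \<and> sing_point_S2 (Wreg \<epsilon>) q"
      using singular_point_exists[OF e_le(1,2)] singular_point_unique[OF e_le(1,3)] by blast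
    moreover have "\<forall>q. q \<in> Nbhd \<and> sing_point_S2 (Wreg \<epsilon>) q \<longrightarrow> hyperbolic_saddle (Wreg \<epsilon>) q \<or> hyperbolic_node (Wreg \<epsilon>) q"
      using singular_point_hyperbolic[OF e_le(1,4)] by blast
    ultimately show "(\<exists>!q. q \<in> Nbhd \<and> sing_point_S2 (Wreg \<epsilon>) q) \<and>
     (\<forall>q. q \<in> Nbhd \<and> sing_point_S2 (Wreg \<epsilon>) q \<longrightarrow> hyperbolic_saddle (Wreg \<epsilon>) q \<or> hyperbolic_node (Wreg \<epsilon>) q)" ..
  qed
  ultimately show ?thesis by blast
qed

end

context hyperbolic_sliding_point
begin

lemma control_radius:
  assumes "\<delta> > 0"
  shows "\<exists>r>0.
    (\<forall>q h. norm (q - p) < r \<longrightarrow> norm (h - E) < r \<longrightarrow> \<bar>dDet q h - d\<bar> < \<bar>d\<bar>/4 \<and>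
        \<bar>DU q h $2 - DU p E $2\<bar> < 1 \<and> \<bar>DV q h $2 - DV p E $2\<bar> < 1) \<and>
    (\<forall>q h. norm (q - p) < r \<longrightarrow> norm (h - ey) < r \<longrightarrow> \<bar>dDet q h - dDet p ey\<bar> < 1 \<and>
        \<bar>DU q h $2 - DU p ey $2\<bar> < 1 \<and> \<bar>DV q h $2 - DV p ey $2\<bar> < 1) \<and>
    (\<forall>q. norm (q - p) < r \<longrightarrow> \<bar>U q $2 - U p $2\<bar> < \<bar>U p $2\<bar>/2 \<and>
        \<bar>V q $2 - V p $2\<bar> < \<bar>V p $2\<bar>/2 \<and> \<bar>V q $2 / (V q $2 - U q $2) - tstar\<bar> < \<delta>)"
proof -
  have cD: "continuous (at z) (\<lambda>z. dDet (fst z) (snd z))" for z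
    using dDet_continuous continuous_on_eq_continuous_at[OF open_UNIV] by blast
  have cU2: "continuous (at z) (\<lambda>z. DU (fst z) (snd z) $ 2)"
    and cV2: "continuous (at z) (\<lambda>z. DV (fst z) (snd z) $ 2)" for z :: "(real^3) \<times> (real^3)"
    by (intro continuous_intros DU_at DV_at)+
  have d4: "\<bar>d\<bar>/4 > 0" and s: "\<bar>U p $2\<bar>/2 > 0" "\<bar>V p $2\<bar>/2 > 0" using dnz sg by auto
  have "\<forall>\<^sub>F z in nhds (p, E). \<bar>dDet (fst z) (snd z) - d\<bar> < \<bar>d\<bar>/4 \<and>
      \<bar>DU (fst z) (snd z) $2 - DU p E $2\<bar> < 1 \<and> \<bar>DV (fst z) (snd z) $2 - DV p E $2\<bar> < 1"
    using continuous_at_eventually_close[OF cD[of "(p, E)"] d4] dd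
      continuous_at_eventually_close[OF cU2[of "(p, E)"], of 1]
      continuous_at_eventually_close[OF cV2[of "(p, E)"], of 1]
    by (simp add: eventually_conj_iff)
  from eventually_nhds_pair_radius[OF this] obtain r1 where r1: "r1 > 0"
    "\<forall>q h. norm (q - p) < r1 \<longrightarrow> norm (h - E) < r1 \<longrightarrow> \<bar>dDet q h - d\<bar> < \<bar>d\<bar>/4 \<and>
        \<bar>DU q h $2 - DU p E $2\<bar> < 1 \<and> \<bar>DV q h $2 - DV p E $2\<bar> < 1" by auto
  have "\<forall>\<^sub>F z in nhds (p, ey). \<bar>dDet (fst z) (snd z) - dDet p ey\<bar> < 1 \<and>
      \<bar>DU (fst z) (snd z) $2 - DU p ey $2\<bar> < 1 \<and> \<bar>DV (fst z) (snd z) $2 - DV p ey $2\<bar> < 1"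
    using continuous_at_eventually_close[OF cD[of "(p, ey)"], of 1]
      continuous_at_eventually_close[OF cU2[of "(p, ey)"], of 1]
      continuous_at_eventually_close[OF cV2[of "(p, ey)"], of 1]
    by (simp add: eventually_conj_iff)
  from eventually_nhds_pair_radius[OF this] obtain r2 where r2: "r2 > 0"
    "\<forall>q h. norm (q - p) < r2 \<longrightarrow> norm (h - ey) < r2 \<longrightarrow> \<bar>dDet q h - dDet p ey\<bar> < 1 \<and>
        \<bar>DU q h $2 - DU p ey $2\<bar> < 1 \<and> \<bar>DV q h $2 - DV p ey $2\<bar> < 1" by auto
  have "\<forall>\<^sub>F q in nhds p. \<bar>U q $2 - U p $2\<bar> < \<bar>U p $2\<bar>/2 \<and>
      \<bar>V q $2 - V p $2\<bar> < \<bar>V p $2\<bar>/2 \<and> \<bar>V q $2 / (V q $2 - U q $2) - tstar\<bar> < \<delta>"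
    using continuous_at_eventually_close[OF U2_continuous s(1)]
      continuous_at_eventually_close[OF V2_continuous s(2)]
      continuous_at_eventually_close[OF ratio_continuous assms]
    by (simp add: eventually_conj_iff tstar_def)
  from eventually_nhds_radius[OF this] obtain r3 where r3: "r3 > 0"
    "\<forall>q. norm (q - p) < r3 \<longrightarrow> \<bar>U q $2 - U p $2\<bar> < \<bar>U p $2\<bar>/2 \<and>
        \<bar>V q $2 - V p $2\<bar> < \<bar>V p $2\<bar>/2 \<and> \<bar>V q $2 / (V q $2 - U q $2) - tstar\<bar> < \<delta>" by auto
  show ?thesis
    using r1 r2 r3 by (intro exI[of _ "min r1 (min r2 r3)"]) auto
qed

lemma box_sizes:
  assumes "r > 0" "Cy \<ge> 0"
  shows "\<exists>a b. (0 < a \<and> a \<le> r/8 \<and> a \<le> 1/4 \<and> (p$3 > 0 \<longrightarrow> a \<le> p$3/4)) \<and>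
    (0 < b \<and> b \<le> r/8 \<and> b \<le> 1/4 \<and> b * (Cy + 1) \<le> a/2)"
proof -
  define a where "a = min (r/8) (min (1/4) (if p$3 > 0 then p$3/4 else 1))"
  define b where "b = min (r/8) (min (1/4) (a / (2 * (Cy + 1))))"
  have a: "0 < a" "a \<le> r/8" "a \<le> 1/4" "p$3 > 0 \<longrightarrow> a \<le> p$3/4" unfolding a_def using assms by auto
  have "b \<le> a / (2 * (Cy + 1))" unfolding b_def by simp
  then have "b * (Cy + 1) \<le> a / (2 * (Cy + 1)) * (Cy + 1)"
    using assms(2) by (intro mult_right_mono) auto
  also have "\<dots> = a/2" using assms(2) by (simp add: field_simps)
  finally have "b * (Cy + 1) \<le> a/2" .
  moreover have "0 < b" unfolding b_def using a(1) assms by auto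
  moreover have "b \<le> r/8" "b \<le> 1/4" unfolding b_def
    by (rule min.cobounded1, rule min.coboundedI2[OF min.cobounded1])
  ultimately show ?thesis using a by blast
qed

lemma slope_window:
  assumes "rK > 0"
  shows "\<exists>\<delta>t c\<phi>. (0 < \<delta>t \<and> \<delta>t \<le> rK/2 \<and> 0 < tstar - \<delta>t \<and> tstar + \<delta>t < 1) \<and>
    (c\<phi> > 0 \<and> (\<forall>s. tstar - \<delta>t \<le> \<phi> s \<and> \<phi> s \<le> tstar + \<delta>t \<longrightarrow> c\<phi> \<le> deriv \<phi> s))"
proof -
  define \<delta>t where "\<delta>t = min (rK/2) (min (tstar/2) ((1-tstar)/2))"
  have dt0: "\<delta>t \<le> rK/2" "\<delta>t \<le> tstar/2" "\<delta>t \<le> (1-tstar)/2"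
    unfolding \<delta>t_def by (simp_all only: min.cobounded1 min.coboundedI2)
  have "tstar + \<delta>t \<le> tstar + (1 - tstar)/2" using dt0(3) by simp
  also have "\<dots> < 1" using tstar_range(2) by (simp add: field_simps)
  finally have "tstar + \<delta>t < 1" .
  moreover have "0 < \<delta>t" using assms tstar_range unfolding \<delta>t_def by simp
  ultimately have delta_t: "0 < \<delta>t" "\<delta>t \<le> rK/2" "0 < tstar - \<delta>t" "tstar + \<delta>t < 1"
    using dt0 tstar_range by linarith+
  then show ?thesis using transition_deriv_lower_bound[OF tf delta_t(3,4)] by blast
qed

lemma box_constants_exist:
  "\<exists>rK Mb r a b Cy BU BV cw \<delta>t c\<phi>. regularization_box U V DU DV p \<phi> d rK Mb r a b Cy BU BV cw \<delta>t c\<phi>"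
proof -
  obtain rK Mb where entries_bound: "rK > 0" "Mb \<ge> 0" "\<forall>q t. norm (q - p) < rK \<longrightarrow> \<bar>t - tstar\<bar> < rK \<longrightarrow>
      \<bar>m11 q t\<bar> \<le> Mb \<and> \<bar>m12 q t\<bar> \<le> Mb \<and> \<bar>m21 q t\<bar> \<le> Mb \<and> \<bar>m22 q t\<bar> \<le> Mb \<and>
      \<bar>Kcoef q t - d\<bar> \<le> \<bar>d\<bar>/2"
    using frame_entries_bounded by blast
  obtain \<delta>t c\<phi> where delta_t: "0 < \<delta>t" "\<delta>t \<le> rK/2" "0 < tstar - \<delta>t" "tstar + \<delta>t < 1"
    and slope_bound: "c\<phi> > 0" "\<forall>s. tstar - \<delta>t \<le> \<phi> s \<and> \<phi> s \<le> tstar + \<delta>t \<longrightarrow> c\<phi> \<le> deriv \<phi> s"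
    using slope_window[OF entries_bound(1)] by blast
  obtain r0 where r0: "r0 > 0"
    "\<forall>q h. norm (q - p) < r0 \<longrightarrow> norm (h - E) < r0 \<longrightarrow> \<bar>dDet q h - d\<bar> < \<bar>d\<bar>/4 \<and>
        \<bar>DU q h $2 - DU p E $2\<bar> < 1 \<and> \<bar>DV q h $2 - DV p E $2\<bar> < 1"
    "\<forall>q h. norm (q - p) < r0 \<longrightarrow> norm (h - ey) < r0 \<longrightarrow> \<bar>dDet q h - dDet p ey\<bar> < 1 \<and>
        \<bar>DU q h $2 - DU p ey $2\<bar> < 1 \<and> \<bar>DV q h $2 - DV p ey $2\<bar> < 1"
    "\<forall>q. norm (q - p) < r0 \<longrightarrow> \<bar>U q $2 - U p $2\<bar> < \<bar>U p $2\<bar>/2 \<and>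
        \<bar>V q $2 - V p $2\<bar> < \<bar>V p $2\<bar>/2 \<and> \<bar>V q $2 / (V q $2 - U q $2) - tstar\<bar> < \<delta>t"
    using control_radius[OF delta_t(1)] by blast
  define r where "r = min r0 rK"
  define Cy where "Cy = (\<bar>dDet p ey\<bar> + 1) / \<bar>d\<bar>"
  define BU where "BU = \<bar>DU p E $2\<bar> + \<bar>DU p ey $2\<bar> + 1"
  define BV where "BV = \<bar>DV p E $2\<bar> + \<bar>DV p ey $2\<bar> + 1"
  define cw where "cw = (\<bar>U p $2\<bar> + \<bar>V p $2\<bar>)/2"
  have r: "0 < r" "r \<le> rK" using r0(1) entries_bound(1) unfolding r_def by auto
  have Cy: "Cy \<ge> 0" and Cyd: "Cy * \<bar>d\<bar> = \<bar>dDet p ey\<bar> + 1" unfolding Cy_def using dnz by auto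
  obtain a b where a: "0 < a" "a \<le> r/8" "a \<le> 1/4" "p$3 > 0 \<longrightarrow> a \<le> p$3/4"
    and b: "0 < b" "b \<le> r/8" "b \<le> 1/4" "b * (Cy + 1) \<le> a/2"
    using box_sizes[OF r(1) Cy] by blast
  have rr0: "r \<le> r0" unfolding r_def by simp
  have dDet_E: "\<forall>q h. norm (q - p) < r \<longrightarrow> norm (h - E) < r \<longrightarrow> \<bar>dDet q h - d\<bar> < \<bar>d\<bar>/4"
    using r0(2) rr0 by auto
  have dDet_ey: "\<forall>q h. norm (q - p) < r \<longrightarrow> norm (h - ey) < r \<longrightarrow> \<bar>dDet q h\<bar> \<le> Cy * \<bar>d\<bar>"
    using r0(3) rr0 Cyd by (smt (verit))
  have DU_y_bound: "\<forall>q h. norm (q - p) < r \<longrightarrow> (norm (h - E) < r \<or> norm (h - ey) < r) \<longrightarrow> \<bar>DU q h $2\<bar> \<le> BU"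
    and DV_y_bound: "\<forall>q h. norm (q - p) < r \<longrightarrow> (norm (h - E) < r \<or> norm (h - ey) < r) \<longrightarrow> \<bar>DV q h $2\<bar> \<le> BV"
    using r0(2,3) rr0 unfolding BU_def BV_def by (smt (verit))+
  have signs_near: "\<forall>q. norm (q - p) < r \<longrightarrow> \<bar>U q $2 - U p $2\<bar> < \<bar>U p $2\<bar>/2 \<and> \<bar>V q $2 - V p $2\<bar> < \<bar>V p $2\<bar>/2"
    and ratio_near: "\<forall>q. norm (q - p) < r \<longrightarrow> \<bar>V q $2 / (V q $2 - U q $2) - tstar\<bar> < \<delta>t"
    using r0(4) rr0 by auto
  have "regularization_box U V DU DV p \<phi> d rK Mb r a b Cy BU BV cw \<delta>t c\<phi>"
    by unfold_locales (fact entries_bound delta_t slope_bound r dDet_E dDet_ey Cy DU_y_bound DV_y_bound signs_near ratio_near cw_def a b)+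
  then show ?thesis by blast
qed

lemma local_theorem:
  "\<exists>N \<epsilon>0. openin (top_of_set upper_hemi) N \<and> p \<in> N \<and> \<epsilon>0 > 0 \<and>
     (\<forall>\<epsilon>. 0 < \<epsilon> \<and> \<epsilon> \<le> \<epsilon>0 \<longrightarrow>
        (\<exists>!q. q \<in> N \<and> sing_point_S2 (Wreg \<epsilon>) q) \<and>
        (\<forall>q. q \<in> N \<and> sing_point_S2 (Wreg \<epsilon>) q \<longrightarrow>
           hyperbolic_saddle (Wreg \<epsilon>) q \<or> hyperbolic_node (Wreg \<epsilon>) q))"
proof -
  obtain rK Mb r a b Cy BU BV cw \<delta>t c\<phi>
    where "regularization_box U V DU DV p \<phi> d rK Mb r a b Cy BU BV cw \<delta>t c\<phi>"
    using box_constants_exist by blast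
  then interpret B: regularization_box U V DU DV p \<phi> d rK Mb r a b Cy BU BV cw \<delta>t c\<phi> .
  show ?thesis using B.box_theorem B.Nbhd_open B.p_in_Nbhd by blast
qed

end

lemma Dcurve_has_derivative:
  "(Dcurve has_derivative (\<lambda>s. s *\<^sub>R (vector [-sin t, 0, cos t] :: real^3))) (at t)"
proof -
  have "((\<lambda>t. vector [cos t, 0, sin t] :: real^3) has_derivative
        (\<lambda>s. vector [s * (- sin t), 0, s * cos t])) (at t)"
    by (rule has_derivative_vector3) (auto intro!: derivative_eq_intros simp: has_field_derivative_def)
  moreover have "(\<lambda>s. vector [s * (- sin t), 0, s * cos t] :: real^3) = (\<lambda>s. s *\<^sub>R vector [-sin t, 0, cos t])"
    by (rule ext) (simp add: vec3_eq)
  ultimately show ?thesis unfolding Dcurve_def[abs_def] by simp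
qed

context tangent_fields
begin

lemma hyperbolic_sliding_point_of_filippov:
  assumes "filippov_hyperbolic_singular U V p" "p$3 \<ge> 0" "transition_function \<phi>"
  shows "\<exists>d. hyperbolic_sliding_point U V DU DV p \<phi> d"
proof -
  from assms(1) obtain \<theta>0 d where
    pS: "p \<in> sphere2" and p2: "p$2 = 0" and sg: "U p $2 * V p $2 < 0"
    and det0: "detUV U V p = 0" and pc: "p = Dcurve \<theta>0"
    and dd0: "((\<lambda>\<theta>. detUV U V (Dcurve \<theta>)) has_real_derivative d) (at \<theta>0)" and dnz: "d \<noteq> 0"
    unfolding filippov_hyperbolic_singular_def filippov_singular_def Lie_f_def by blast
  have pp: "p \<bullet> p = 1" using pS by (simp add: sphere2_def norm_eq_1)
  interpret A: chart_at U V DU DV p by unfold_locales (fact pp p2)+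
  have Deq: "detUV U V = Det" by (rule ext) (simp add: detUV_def Det_def triple_def)
  have "p$1 = cos \<theta>0" "p$3 = sin \<theta>0" using pc by (simp_all add: Dcurve_def)
  then have Ev: "(vector [-sin \<theta>0, 0, cos \<theta>0] :: real^3) = A.E" by (simp add: A.E_def)
  have "((\<lambda>\<theta>. Det (Dcurve \<theta>)) has_real_derivative dDet p A.E) (at \<theta>0)"
    using has_real_derivative_along_curve[OF Dcurve_has_derivative[of \<theta>0] Det_has_derivative]
    unfolding Ev pc .
  then have "dDet p A.E = d" using dd0 unfolding Deq by (rule DERIV_unique)
  then have "hyperbolic_sliding_point U V DU DV p \<phi> d"
    using assms(2,3) sg det0 dnz unfolding Deq by unfold_locales auto
  then show ?thesis by blast
qed

end

lemma pcomp_tangent_fields: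
  "tangent_fields (pcomp m X) (pcomp m Y) (dpcomp m X) (dpcomp m Y)"
  by unfold_locales
    (simp_all add: pcomp_has_derivative dpcomp_continuous pcomp_tangent pcomp_equator sphere2_def)

theorem mainTheorem2:
  fixes m :: nat and X Y :: pfield and p :: "real ^ 3"
  assumes "m \<ge> 1"
    and "(X, Y) \<in> Omega m"
    and "filippov_hyperbolic_singular (pcomp m X) (pcomp m Y) p"
    and "p \<in> upper_hemi"
  shows "\<forall>\<phi>. transition_function \<phi> \<longrightarrow>
           (\<exists>V \<epsilon>0. openin (top_of_set upper_hemi) V \<and> p \<in> V \<and> \<epsilon>0 > 0 \<and>
              (\<forall>\<epsilon>. 0 < \<epsilon> \<and> \<epsilon> \<le> \<epsilon>0 \<longrightarrow>
                 (\<exists>!q. q \<in> V \<and> sing_point_S2 (reg_comp m \<phi> \<epsilon> (X, Y)) q) \<and>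
                 (\<forall>q. q \<in> V \<and> sing_point_S2 (reg_comp m \<phi> \<epsilon> (X, Y)) q \<longrightarrow>
                    hyperbolic_saddle (reg_comp m \<phi> \<epsilon> (X, Y)) q \<or>
                    hyperbolic_node (reg_comp m \<phi> \<epsilon> (X, Y)) q)))"
proof (intro allI impI)
  fix \<phi> :: "real \<Rightarrow> real" assume tf: "transition_function \<phi>"
  interpret T: tangent_fields "pcomp m X" "pcomp m Y" "dpcomp m X" "dpcomp m Y"
    by (rule pcomp_tangent_fields)
  have p3: "p$3 \<ge> 0" using assms(4) by (simp add: upper_hemi_def)
  obtain d where "hyperbolic_sliding_point (pcomp m X) (pcomp m Y) (dpcomp m X) (dpcomp m Y) p \<phi> d"
    using T.hyperbolic_sliding_point_of_filippov[OF assms(3) p3 tf] by blast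
  then interpret M: hyperbolic_sliding_point "pcomp m X" "pcomp m Y" "dpcomp m X" "dpcomp m Y" p \<phi> d .
  have "reg_comp m \<phi> \<epsilon> (X, Y) = T.reg \<phi> \<epsilon>" for \<epsilon>
    by (rule ext) (simp add: reg_comp_def T.reg_def)
  then show "\<exists>V \<epsilon>0. openin (top_of_set upper_hemi) V \<and> p \<in> V \<and> \<epsilon>0 > 0 \<and>
      (\<forall>\<epsilon>. 0 < \<epsilon> \<and> \<epsilon> \<le> \<epsilon>0 \<longrightarrow>
         (\<exists>!q. q \<in> V \<and> sing_point_S2 (reg_comp m \<phi> \<epsilon> (X, Y)) q) \<and>
         (\<forall>q. q \<in> V \<and> sing_point_S2 (reg_comp m \<phi> \<epsilon> (X, Y)) q \<longrightarrow>
            hyperbolic_saddle (reg_comp m \<phi> \<epsilon> (X, Y)) q \<or> hyperbolic_node (reg_comp m \<phi> \<epsilon> (X, Y)) q))"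
    using M.local_theorem by simp
qed

end
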